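(* Let $\ell,\ell'$ be geodesic lines of $\mathbb{H}^2$ and $h\in G_0$ with $\sup_{(x,x')\in\ell\times\ell'}\big(d(x,h\cdot x')-d(x,x')\big)<0$. Suppose $\ell,\ell'$ have disjoint closures in $\overline{\mathbb{H}^2}$ and are transversely oriented away from each other, and $\ell$ and $h\cdot\ell'$ have disjoint closures in $\overline{\mathbb{H}^2}$ and are transversely oriented away from each other (with the transverse orientation of $h\cdot\ell'$ induced by $h$). Let $(P'_+(t))_{t>0}$, $(P'_-(t))_{t>0}$ be the two connected components of $\partial\mathsf{SQ}(\ell')\smallsetminus\{e\}$ and $(P_+(t))_{t>0}$, $(P_-(t))_{t>0}$ those of $\partial\mathsf{SQ}(\ell)\smallsetminus\{e\}$. Then either $h\in\mathsf{SQ}(\ell)$, or exactly one of the open rays $(hP'_+(t))_{t>0}$, $(hP'_-(t))_{t>0}$ intersects $\mathsf{SQ}(\ell)$ transversely (and these cases are mutually exclusive). Similarly, either $h\in\mathsf{SQ}(\ell')^{-1}$, or exactly one of the open rays $(P_+(t)^{-1}h)_{t>0}$, $(P_-(t)^{-1}h)_{t>0}$ intersects $\mathsf{SQ}(\ell')^{-1}$ transversely (and these cases are mutually exclusive).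
   Context: $\mathbb{H}^2$ is the hyperbolic plane with metric $d$, $\overline{\mathbb{H}^2}=\mathbb{H}^2\cup\partial_\infty\mathbb{H}^2$, and $G_0=\mathrm{PSL}_2(\mathbb{R})$ (identified with $\mathrm{AdS}^3$). For a transversely oriented geodesic line $\ell$, the stem quadrant $\mathsf{SQ}(\ell)\subset G_0$ is the set of hyperbolic elements whose translation axis is orthogonal to $\ell$ and which translate towards the positive side of $\ell$; it is an open subset of a timelike totally geodesic plane of $\mathrm{AdS}^3$, and $\partial\mathsf{SQ}(\ell)$ is its boundary in that plane: the identity $e$ together with two lightlike rays $\{P_\pm(t):t>0\}$, where $P_\pm$ are one-parameter subgroups of parabolic elements fixing the two endpoints of $\ell$. $A^{-1}=\{a^{-1}:a\in A\}$. Transverse intersection means a curve meeting the surface transversely in $G_0$. *)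

theory Defs
  imports "HOL-Analysis.Analysis"
begin

text \<open>G_0 = PSL_2(R) is represented by SL_2(R) (real 2x2 matrices of determinant 1);
all subsets of G_0 used below are invariant under g \<mapsto> -g, so membership is well defined on
PSL_2(R). The hyperbolic plane is the hyperboloid model realised in the 3-dimensional Minkowski
space of real symmetric 2x2 matrices with quadratic form det (signature (1,2)); G_0 acts by
congruence X \<mapsto> g X g^T, which is the standard isometric action of PSL_2(R).\<close>

type_synonym mat2 = "real^2^2"

definition SL2 :: "mat2 set" where
  "SL2 = {g. det g = 1}"

definition sym2 :: "mat2 \<Rightarrow> bool" where
  "sym2 X \<longleftrightarrow> transpose X = X"

definition mink :: "mat2 \<Rightarrow> mat2 \<Rightarrow> real" where
  "mink X Y = (det (X + Y) - det X - det Y) / 2"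

definition hyp_plane :: "mat2 set" where
  "hyp_plane = {X. sym2 X \<and> det X = 1 \<and> X $ 1 $ 1 > 0}"

definition hdist :: "mat2 \<Rightarrow> mat2 \<Rightarrow> real" where
  "hdist X Y = arcosh (mink X Y)"

definition act :: "mat2 \<Rightarrow> mat2 \<Rightarrow> mat2" where
  "act g X = g ** X ** transpose g"

text \<open>Ideal points (points of the boundary at infinity) are represented by nonzero future
null vectors, i.e. the rays through them.\<close>
definition ideal_pt :: "mat2 \<Rightarrow> bool" where
  "ideal_pt V \<longleftrightarrow> sym2 V \<and> det V = 0 \<and> V \<noteq> 0 \<and> V $ 1 $ 1 + V $ 2 $ 2 > 0"

text \<open>A transversely oriented geodesic line is given by a unit spacelike normal N:
the line is N^\<bottom> \<inter> H^2 and its positive side is {mink X N > 0}.\<close>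
definition spacelike_unit :: "mat2 \<Rightarrow> bool" where
  "spacelike_unit N \<longleftrightarrow> sym2 N \<and> det N = -1"

definition geod :: "mat2 \<Rightarrow> mat2 set" where
  "geod N = {X \<in> hyp_plane. mink X N = 0}"

definition pos_side :: "mat2 \<Rightarrow> mat2 set" where
  "pos_side N = {X \<in> hyp_plane. mink X N > 0}"

text \<open>Closure of geod N in the compactification = the line together with its two endpoints
(ideal points V with mink V N = 0). Disjoint closures: no common point and no common endpoint.\<close>
definition disjoint_closures :: "mat2 \<Rightarrow> mat2 \<Rightarrow> bool" where
  "disjoint_closures N M \<longleftrightarrow>
     geod N \<inter> geod M = {} \<and> \<not> (\<exists>V. ideal_pt V \<and> mink V N = 0 \<and> mink V M = 0)"

definition oriented_away :: "mat2 \<Rightarrow> mat2 \<Rightarrow> bool" where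
  "oriented_away N M \<longleftrightarrow>
     (\<forall>X\<in>geod M. mink X N < 0) \<and> (\<forall>X\<in>geod N. mink X M < 0)"

definition hyperbolic_el :: "mat2 \<Rightarrow> bool" where
  "hyperbolic_el g \<longleftrightarrow> g \<in> SL2 \<and> \<bar>trace g\<bar> > 2"

definition transl_axis :: "mat2 \<Rightarrow> mat2 set" where
  "transl_axis g = {X \<in> hyp_plane. hdist X (act g X) = (INF Y\<in>hyp_plane. hdist Y (act g Y))}"

text \<open>Geodesic lines meet orthogonally: they share a point p at which their tangent vectors
(in the tangent space p^\<bottom>, with Riemannian metric the restriction of mink) are orthogonal.\<close>
definition orth_geod :: "mat2 \<Rightarrow> mat2 \<Rightarrow> bool" where
  "orth_geod M N \<longleftrightarrow> (\<exists>p \<in> geod M \<inter> geod N. \<forall>u w.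
      sym2 u \<and> mink u p = 0 \<and> mink u M = 0 \<and> sym2 w \<and> mink w p = 0 \<and> mink w N = 0
      \<longrightarrow> mink u w = 0)"

definition SQ :: "mat2 \<Rightarrow> mat2 set" where
  "SQ N = {g \<in> SL2. hyperbolic_el g
      \<and> (\<exists>M. spacelike_unit M \<and> transl_axis g = geod M \<and> orth_geod M N)
      \<and> (\<exists>p \<in> transl_axis g \<inter> geod N. act g p \<in> pos_side N)}"

text \<open>One-parameter subgroup of parabolic (unipotent) elements t \<mapsto> exp(tX) = I + tX,
X nonzero nilpotent.\<close>
definition par_curve :: "mat2 \<Rightarrow> real \<Rightarrow> mat2" where
  "par_curve X t = mat 1 + t *\<^sub>R X"

text \<open>X generates one of the two lightlike boundary rays {P(t) : t > 0} of SQ(N): a parabolic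
one-parameter subgroup fixing an endpoint of geod N whose positive half lies in the boundary
(= closure minus the open quadrant, which contains no parabolic element) of SQ(N).\<close>
definition bdry_ray :: "mat2 \<Rightarrow> mat2 \<Rightarrow> bool" where
  "bdry_ray N X \<longleftrightarrow> X \<noteq> 0 \<and> X ** X = 0
     \<and> (\<exists>V. ideal_pt V \<and> mink V N = 0 \<and> (\<forall>t. \<exists>c>0. act (par_curve X t) V = c *\<^sub>R V))
     \<and> (\<forall>t>0. par_curve X t \<in> closure (SQ N))"

definition ray_set :: "mat2 \<Rightarrow> mat2 set" where
  "ray_set X = {par_curve X t | t. t > 0}"

definition surf_tangent :: "mat2 set \<Rightarrow> mat2 \<Rightarrow> mat2 set" where
  "surf_tangent S p = {v. \<exists>\<gamma> e. 0 < e \<and> \<gamma> 0 = p \<and> (\<forall>s. \<bar>s\<bar> < e \<longrightarrow> \<gamma> s \<in> S)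
      \<and> (\<gamma> has_vector_derivative v) (at 0)}"

definition meets_transv :: "(real \<Rightarrow> mat2) \<Rightarrow> mat2 set \<Rightarrow> bool" where
  "meets_transv c S \<longleftrightarrow> (\<exists>t>0. c t \<in> S) \<and>
     (\<forall>t>0. c t \<in> S \<longrightarrow> c differentiable (at t) \<and> vector_derivative c (at t) \<notin> surf_tangent S (c t))"

definition exactly_one3 :: "bool \<Rightarrow> bool \<Rightarrow> bool \<Rightarrow> bool" where
  "exactly_one3 A B C \<longleftrightarrow> (A \<and> \<not> B \<and> \<not> C) \<or> (\<not> A \<and> B \<and> \<not> C) \<or> (\<not> A \<and> \<not> B \<and> C)"

end

theory Submission
  imports Defs
begin

text \<open>Conjugating by \<open>SL\<^sub>2\<close> moves \<open>\<ell>\<close> to the line \<open>{diag (y, 1/y)}\<close>, whose stem quadrant is the explicit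
set of \<open>g\<close> with \<open>g\<^sub>1\<^sub>1 = g\<^sub>2\<^sub>2\<close>, \<open>|g\<^sub>1\<^sub>1| > 1\<close>, \<open>g\<^sub>1\<^sub>1 g\<^sub>1\<^sub>2 > 0\<close>. If \<open>K\<close> and \<open>H\<close> move the standard line
to \<open>\<ell>'\<close> and \<open>h \<ell>'\<close> in this frame, then \<open>h\<close> becomes \<open>H K\<^sup>-\<^sup>1\<close>, the two boundary rays of \<open>SQ(\<ell>')\<close>
translated by \<open>h\<close> become \<open>H P(t) K\<^sup>-\<^sup>1\<close> with \<open>P(t)\<close> upper resp. lower unipotent, and the hypotheses
become a sign pattern on the entries of \<open>K\<close> and \<open>H\<close> (the lines are oriented away from each other
and have disjoint closures) together with \<open>|H\<^sub>i\<^sub>j| < |K\<^sub>i\<^sub>j|\<close> (the displacement bound, tested along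
the two lines). These inequalities force the point where either ray crosses the hyperplane
\<open>g\<^sub>1\<^sub>1 = g\<^sub>2\<^sub>2\<close> into the stem quadrant, and the two rays cross that hyperplane in opposite
directions. Hence, according to the sign of \<open>g\<^sub>1\<^sub>1 - g\<^sub>2\<^sub>2\<close> at \<open>H K\<^sup>-\<^sup>1\<close>, exactly one of the three
events occurs. The second statement is the first one for \<open>(\<ell>', \<ell>, h\<^sup>-\<^sup>1)\<close>.\<close>

section \<open>Coordinates on 2x2 matrices\<close>

definition M2 :: "real \<Rightarrow> real \<Rightarrow> real \<Rightarrow> real \<Rightarrow> mat2" where
  "M2 a b c d = (\<chi> i j. if i = 1 then (if j = 1 then a else b) else (if j = 1 then c else d))"

lemma M2_nth [simp]:
  "M2 a b c d $ 1 $ 1 = a" "M2 a b c d $ 1 $ 2 = b" "M2 a b c d $ 2 $ 1 = c" "M2 a b c d $ 2 $ 2 = d"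
  by (simp_all add: M2_def)

lemma M2_cases: obtains a b c d where "g = M2 a b c d"
proof
  show "g = M2 (g$1$1) (g$1$2) (g$2$1) (g$2$2)" by (simp add: vec_eq_iff forall_2)
qed

lemma M2_eq_iff [simp]: "M2 a b c d = M2 a' b' c' d' \<longleftrightarrow> a = a' \<and> b = b' \<and> c = c' \<and> d = d'"
  by (metis M2_nth)

lemma M2_mult [simp]: "M2 a b c d ** M2 a' b' c' d' =
   M2 (a*a'+b*c') (a*b'+b*d') (c*a'+d*c') (c*b'+d*d')"
  by (simp add: matrix_matrix_mult_def vec_eq_iff forall_2 sum_2)

lemma M2_transpose [simp]: "transpose (M2 a b c d) = M2 a c b d"
  by (simp add: transpose_def vec_eq_iff forall_2)

lemma M2_add [simp]: "M2 a b c d + M2 a' b' c' d' = M2 (a+a') (b+b') (c+c') (d+d')"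
  by (simp add: vec_eq_iff forall_2)

lemma M2_scaleR [simp]: "r *\<^sub>R M2 a b c d = M2 (r*a) (r*b) (r*c) (r*d)"
  by (simp add: vec_eq_iff forall_2)

lemma M2_det [simp]: "det (M2 a b c d) = a*d - b*c"
  by (simp add: det_2)

lemma M2_trace [simp]: "trace (M2 a b c d) = a + d"
  by (simp add: trace_def sum_2)

lemma M2_mat1: "mat 1 = M2 1 0 0 1"
  by (simp add: vec_eq_iff forall_2 mat_def)

lemma M2_zero: "0 = M2 0 0 0 0"
  by (simp add: vec_eq_iff forall_2)

lemma mink_M2 [simp]: "mink (M2 a b c d) (M2 a' b' c' d') = (a*d' + d*a' - b*c' - c*b')/2"
  by (simp add: mink_def algebra_simps)

lemma sym2_M2 [simp]: "sym2 (M2 a b c d) \<longleftrightarrow> b = c"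
  by (auto simp: sym2_def)

lemma hyp_plane_M2: "M2 a b c d \<in> hyp_plane \<longleftrightarrow> b = c \<and> a*d - b*c = 1 \<and> a > 0"
  by (simp add: hyp_plane_def)

lemma mink_sym: "mink X Y = mink Y X"
  by (simp add: mink_def algebra_simps)

lemma mink_add_scaleR: "mink (a *\<^sub>R X + b *\<^sub>R Y) Z = a * mink X Z + b * mink Y Z"
  by (cases X rule: M2_cases, cases Y rule: M2_cases, cases Z rule: M2_cases)
     (simp add: field_simps)

lemma mink_scaleR_right: "mink X (c *\<^sub>R Y) = c * mink X Y"
  by (cases X rule: M2_cases, cases Y rule: M2_cases) (simp add: field_simps)

lemma det_add_scaleR: "det (a *\<^sub>R X + b *\<^sub>R Y) = a^2 * det X + 2*a*b * mink X Y + b^2 * det Y"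
  by (cases X rule: M2_cases, cases Y rule: M2_cases) (simp add: field_simps power2_eq_square)

lemma det_scaleR_mat2: "det (r *\<^sub>R (X::mat2)) = r^2 * det X"
  by (cases X rule: M2_cases) (simp add: power2_eq_square algebra_simps)

lemma scaleR_in_hyp_plane:
  assumes "sym2 Y" "det Y > 0" "Y$1$1 > 0"
  shows "(1 / sqrt (det Y)) *\<^sub>R Y \<in> hyp_plane"
proof -
  have "det ((1 / sqrt (det Y)) *\<^sub>R Y) = 1"
    using assms(2) by (simp add: det_scaleR_mat2 power_divide)
  then show ?thesis using assms by (simp add: hyp_plane_def sym2_def transpose_scalar)
qed

text \<open>On \<open>SL\<^sub>2\<close> the adjugate is the inverse; unlike \<open>matrix_inv\<close> it is linear.\<close>

definition adj2 :: "mat2 \<Rightarrow> mat2" where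
  "adj2 g = M2 (g$2$2) (-g$1$2) (-g$2$1) (g$1$1)"

lemma adj2_M2 [simp]: "adj2 (M2 a b c d) = M2 d (-b) (-c) a"
  by (simp add: adj2_def)

lemma adj2_mult: "adj2 (g ** h) = adj2 h ** adj2 g"
  by (cases g rule: M2_cases, cases h rule: M2_cases) (simp add: algebra_simps)

lemma adj2_adj2 [simp]: "adj2 (adj2 g) = g"
  by (cases g rule: M2_cases) simp

lemma det_adj2 [simp]: "det (adj2 g) = det g"
  by (cases g rule: M2_cases) (simp add: algebra_simps)

lemma mult_adj2_right: "det g = 1 \<Longrightarrow> g ** adj2 g = mat 1"
  by (cases g rule: M2_cases) (simp add: M2_mat1 algebra_simps)

lemma mult_adj2_left: "det g = 1 \<Longrightarrow> adj2 g ** g = mat 1"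
  by (cases g rule: M2_cases) (simp add: M2_mat1 algebra_simps)

lemma linear_adj2: "linear adj2"
proof (rule linearI)
  show "adj2 (a + b) = adj2 a + adj2 b" for a b
    by (cases a rule: M2_cases, cases b rule: M2_cases) simp
  show "adj2 (r *\<^sub>R a) = r *\<^sub>R adj2 a" for r a
    by (cases a rule: M2_cases) simp
qed

lemma matrix_inv_eq_adj2:
  assumes "det g = 1" shows "matrix_inv g = adj2 g"
proof -
  have "\<exists>A'. g ** A' = mat 1 \<and> A' ** g = mat 1"
    using mult_adj2_right[OF assms] mult_adj2_left[OF assms] by blast
  then have inv: "matrix_inv g ** g = mat 1"
    unfolding matrix_inv_def by (rule someI2_ex) simp
  have "matrix_inv g = matrix_inv g ** (g ** adj2 g)"
    using mult_adj2_right[OF assms] by simp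
  also have "\<dots> = adj2 g" by (simp add: matrix_mul_assoc inv)
  finally show ?thesis .
qed

section \<open>The action on the hyperboloid and conjugation invariance\<close>

lemma act_M2 [simp]: "act (M2 a b c d) (M2 x y z w) = M2 a b c d ** M2 x y z w ** M2 a c b d"
  by (simp add: act_def)

lemma act_act: "act k (act g X) = act (k ** g) X"
  by (simp add: act_def matrix_mul_assoc matrix_transpose_mul)

lemma act_mat1 [simp]: "act (mat 1) X = X"
  by (simp add: act_def)

lemma act_adj2_act: "det k = 1 \<Longrightarrow> act (adj2 k) (act k X) = X"
  by (simp add: act_act mult_adj2_left)

lemma act_act_adj2: "det k = 1 \<Longrightarrow> act k (act (adj2 k) X) = X"
  by (simp add: act_act mult_adj2_right)

lemma det_act: "det (act k X) = (det k)^2 * det X"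
  by (simp add: act_def det_mul det_transpose power2_eq_square)

lemma act_add: "act k (X + Y) = act k X + act k Y"
  by (cases k rule: M2_cases, cases X rule: M2_cases, cases Y rule: M2_cases) (simp add: algebra_simps)

lemma mink_act: "det k = 1 \<Longrightarrow> mink (act k X) (act k Y) = mink X Y"
  by (simp add: mink_def act_add[symmetric] det_act)

lemma mink_act_right: "det k = 1 \<Longrightarrow> mink Z (act k M) = mink (act (adj2 k) Z) M"
  by (metis act_adj2_act det_adj2 mink_act)

lemma sym2_act: "sym2 X \<Longrightarrow> sym2 (act k X)"
  by (simp add: sym2_def act_def matrix_transpose_mul matrix_mul_assoc)

lemma act_in_hyp_plane:
  assumes "X \<in> hyp_plane" "det k = 1" shows "act k X \<in> hyp_plane"
proof -
  obtain a b c d where X: "X = M2 a b c d" by (rule M2_cases)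
  obtain p q r t where k: "k = M2 p q r t" by (rule M2_cases)
  have h: "b = c" "a*d - b*c = 1" "a > 0" "p*t - q*r = 1"
    using assms X k by (auto simp: hyp_plane_M2)
  have e: "a * (p*(p*a + q*c) + q*(p*b + q*d)) = (p*a + q*b)^2 + q^2"
  proof -
    have "a * (p*(p*a + q*c) + q*(p*b + q*d)) - ((p*a + q*b)^2 + q^2) = q^2*(a*d - b*c - 1)"
      using h(1) by (simp add: power2_eq_square algebra_simps)
    then show ?thesis using h(2) by simp
  qed
  have "(p*a + q*b)^2 + q^2 > 0"
  proof (cases "q = 0")
    case True
    then show ?thesis using h by auto
  qed (intro add_nonneg_pos; simp)
  then have "p*(p*a + q*c) + q*(p*b + q*d) > 0" using e h(3)
    by (metis zero_less_mult_pos)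
  then show ?thesis using X k h sym2_act[of X k] det_act[of k X]
    by (simp add: hyp_plane_def algebra_simps)
qed

lemma act_in_hyp_plane_iff: "det k = 1 \<Longrightarrow> act k X \<in> hyp_plane \<longleftrightarrow> X \<in> hyp_plane"
  by (metis act_adj2_act det_adj2 act_in_hyp_plane)

lemma hdist_act: "det k = 1 \<Longrightarrow> hdist (act k X) (act k Y) = hdist X Y"
  by (simp add: hdist_def mink_act)

lemma mem_act_image_iff: "det k = 1 \<Longrightarrow> Z \<in> act k ` A \<longleftrightarrow> act (adj2 k) Z \<in> A"
  by (metis act_act_adj2 act_adj2_act image_iff)

lemma act_image_hyp_plane: "det k = 1 \<Longrightarrow> act k ` hyp_plane = hyp_plane"
  by (auto simp: mem_act_image_iff act_in_hyp_plane_iff)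

lemma geod_act: "det k = 1 \<Longrightarrow> geod (act k M) = act k ` geod M"
  by (auto simp: mem_act_image_iff geod_def act_in_hyp_plane_iff mink_act_right act_adj2_act)

lemma pos_side_act: "det k = 1 \<Longrightarrow> pos_side (act k M) = act k ` pos_side M"
  by (auto simp: mem_act_image_iff pos_side_def act_in_hyp_plane_iff mink_act_right act_adj2_act)

lemma spacelike_unit_act: "det k = 1 \<Longrightarrow> spacelike_unit N \<Longrightarrow> spacelike_unit (act k N)"
  by (simp add: spacelike_unit_def sym2_act det_act)

definition conj2 :: "mat2 \<Rightarrow> mat2 \<Rightarrow> mat2" where
  "conj2 k g = k ** g ** adj2 k"

lemma act_conj2: "det k = 1 \<Longrightarrow> act (conj2 k g) (act k X) = act k (act g X)"
  by (simp add: conj2_def act_act matrix_mul_assoc[symmetric] mult_adj2_left)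

lemma det_conj2: "det k = 1 \<Longrightarrow> det (conj2 k g) = det g"
  by (simp add: conj2_def det_mul)

lemma trace_conj2: "det k = 1 \<Longrightarrow> trace (conj2 k g) = trace g"
  by (metis conj2_def matrix_mul_assoc matrix_mul_lid mult_adj2_left trace_mul_sym)

lemma conj2_conj2: "det k = 1 \<Longrightarrow> conj2 (adj2 k) (conj2 k g) = g"
  by (simp add: conj2_def matrix_mul_assoc mult_adj2_left adj2_mult)
     (simp add: matrix_mul_assoc[symmetric] mult_adj2_left)

lemma transl_axis_conj2:
  assumes k: "det k = 1"
  shows "transl_axis (conj2 k g) = act k ` transl_axis g"
proof -
  have disp: "hdist (act k Y) (act (conj2 k g) (act k Y)) = hdist Y (act g Y)" for Y
    using k by (simp add: act_conj2 hdist_act)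
  have "(\<lambda>Y. hdist Y (act (conj2 k g) Y)) ` hyp_plane
      = (\<lambda>Y. hdist Y (act (conj2 k g) Y)) ` act k ` hyp_plane"
    using act_image_hyp_plane[OF k] by simp
  also have "\<dots> = (\<lambda>Y. hdist Y (act g Y)) ` hyp_plane"
    by (simp add: image_image disp)
  finally have inf: "(INF Y\<in>hyp_plane. hdist Y (act (conj2 k g) Y)) = (INF Y\<in>hyp_plane. hdist Y (act g Y))"
    by simp
  have "Z \<in> transl_axis (conj2 k g) \<longleftrightarrow> act (adj2 k) Z \<in> transl_axis g" for Z
  proof -
    have "hdist Z (act (conj2 k g) Z) = hdist (act (adj2 k) Z) (act g (act (adj2 k) Z))"
      using disp[of "act (adj2 k) Z"] k by (simp add: act_act_adj2)
    then show ?thesis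
      using k by (simp add: transl_axis_def inf act_in_hyp_plane_iff)
  qed
  then show ?thesis using mem_act_image_iff[OF k] by blast
qed

lemma orth_geod_act:
  assumes k: "det k = 1" and orth: "orth_geod M N"
  shows "orth_geod (act k M) (act k N)"
proof -
  obtain p where p: "p \<in> geod M \<inter> geod N" and perp: "\<forall>u w.
      sym2 u \<and> mink u p = 0 \<and> mink u M = 0 \<and> sym2 w \<and> mink w p = 0 \<and> mink w N = 0
      \<longrightarrow> mink u w = 0" using orth unfolding orth_geod_def by blast
  have "mink u w = 0" if "sym2 u" "mink u (act k p) = 0" "mink u (act k M) = 0"
    "sym2 w" "mink w (act k p) = 0" "mink w (act k N) = 0" for u w
  proof -
    have "mink (act (adj2 k) u) (act (adj2 k) w) = 0"
      using perp[rule_format, of "act (adj2 k) u" "act (adj2 k) w"] sym2_act that k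
      by (simp add: mink_act_right)
    then show ?thesis using k mink_act[of "adj2 k" u w] by simp
  qed
  moreover have "act k p \<in> geod (act k M) \<inter> geod (act k N)" using p k by (simp add: geod_act)
  ultimately show ?thesis unfolding orth_geod_def by blast
qed

lemma SQ_conj2:
  assumes k: "det k = 1" and g: "g \<in> SQ N"
  shows "conj2 k g \<in> SQ (act k N)"
proof -
  from g obtain M p where g1: "g \<in> SL2" "hyperbolic_el g" and M: "spacelike_unit M"
    "transl_axis g = geod M" "orth_geod M N"
    and p: "p \<in> transl_axis g" "p \<in> geod N" "act g p \<in> pos_side N"
    unfolding SQ_def by blast
  have "conj2 k g \<in> SL2 \<and> hyperbolic_el (conj2 k g)"
    using g1 k by (simp add: hyperbolic_el_def SL2_def det_conj2 trace_conj2)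
  moreover have "spacelike_unit (act k M) \<and> transl_axis (conj2 k g) = geod (act k M)
      \<and> orth_geod (act k M) (act k N)"
    using M k by (simp add: spacelike_unit_act transl_axis_conj2 geod_act orth_geod_act)
  moreover have "act k p \<in> transl_axis (conj2 k g) \<inter> geod (act k N)
     \<and> act (conj2 k g) (act k p) \<in> pos_side (act k N)"
    using p k by (simp add: transl_axis_conj2 geod_act pos_side_act act_conj2)
  ultimately show ?thesis unfolding SQ_def by blast
qed

lemma SQ_conj2_iff:
  assumes k: "det k = 1"
  shows "conj2 k g \<in> SQ (act k N) \<longleftrightarrow> g \<in> SQ N"
proof
  assume "conj2 k g \<in> SQ (act k N)"
  from SQ_conj2[OF _ this, of "adj2 k"] k show "g \<in> SQ N"
    by (simp add: conj2_conj2 act_adj2_act)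
qed (rule SQ_conj2[OF k])

section \<open>The stem quadrant of a standard line\<close>

text \<open>\<open>geod N_std\<close> consists of the diagonal points \<open>diag (y, 1/y)\<close>, and its positive side of
the points with positive off-diagonal entry.\<close>

definition N_std :: mat2 where
  "N_std = M2 0 (-1) (-1) 0"

definition SQ_std :: "mat2 set" where
  "SQ_std = {g. det g = 1 \<and> g$1$1 = g$2$2 \<and> \<bar>g$1$1\<bar> > 1 \<and> g$1$1 * g$1$2 > 0}"

lemma mink_N_std: "mink (M2 x y y' z) N_std = (y + y')/2"
  by (simp add: N_std_def)

text \<open>By the displacement identity below, the displacement of a point \<open>Y\<close> under \<open>g\<close> depends
only on \<open>mink Y (axis_normal g)\<close>; for hyperbolic \<open>g\<close> this normal is spacelike and the translation
axis is the geodesic it defines.\<close>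

definition axis_normal :: "mat2 \<Rightarrow> mat2" where
  "axis_normal g = M2 (-(g$1$2)) ((g$1$1 - g$2$2)/2) ((g$1$1 - g$2$2)/2) (g$2$1)"

lemma displacement_identity:
  assumes "det g = 1" "sym2 Y"
  shows "mink Y (act g Y) = ((trace g)^2/2 - 1) * det Y + 2 * (mink Y (axis_normal g))^2"
proof -
  obtain a b c d where g: "g = M2 a b c d" by (rule M2_cases)
  obtain x y z w where Y: "Y = M2 x y z w" by (rule M2_cases)
  have h: "a*d - b*c = 1" "y = z" using assms g Y by auto
  have "mink Y (act g Y) - (((trace g)^2/2 - (a*d - b*c)) * det Y + 2 * (mink Y (axis_normal g))^2) = 0"
    using h(2) by (simp add: g Y axis_normal_def power2_eq_square field_simps)
  then show ?thesis using h(1) by simp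
qed

lemma det_axis_normal: "det g = 1 \<Longrightarrow> det (axis_normal g) = 1 - (trace g)^2/4"
  by (cases g rule: M2_cases) (simp add: axis_normal_def power2_eq_square field_simps)

lemma mink_hyp_plane_ge_1:
  assumes "X \<in> hyp_plane" "Y \<in> hyp_plane" shows "mink X Y \<ge> 1"
proof -
  obtain a b d where X: "X = M2 a b b d" and hx: "a*d = 1 + b*b" "a > 0"
    using assms(1) by (cases X rule: M2_cases) (auto simp: hyp_plane_M2)
  obtain e f h where Y: "Y = M2 e f f h" and hy: "e*h = 1 + f*f" "e > 0"
    using assms(2) by (cases Y rule: M2_cases) (auto simp: hyp_plane_M2)
  have "a*d > 0" "e*h > 0" using hx hy by (simp_all add: add_pos_nonneg)
  then have "d > 0" "h > 0" using hx(2) hy(2) zero_less_mult_pos by blast+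
  then have pos: "a*h + d*e > 0" using hx(2) hy(2) by (simp add: add_pos_pos)
  have "(a*h + d*e)^2 - (2*(1 + b*f))^2 = (a*h - d*e)^2 + 4*((a*d)*(e*h) - (1+b*f)^2)"
    by (simp add: power2_eq_square algebra_simps)
  also have "(a*d)*(e*h) - (1+b*f)^2 = (b-f)^2"
    unfolding hx(1) hy(1) by (simp add: power2_eq_square algebra_simps)
  finally have "(a*h + d*e)^2 - (2*(1 + b*f))^2 = (a*h - d*e)^2 + 4*(b-f)^2" .
  moreover have "0 \<le> (a*h - d*e)^2 + 4*(b-f)^2" by simp
  ultimately have "(2*(1 + b*f))^2 \<le> (a*h + d*e)^2" by linarith
  then have "2*(1 + b*f) \<le> a*h + d*e"
    by (rule power2_le_imp_le[OF _ less_imp_le[OF pos]])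
  then show ?thesis by (simp add: X Y algebra_simps)
qed

lemma mink_self: "mink X X = det X"
  by (cases X rule: M2_cases) (simp add: field_simps)

lemma ex_hyp_plane_mink_eq_0:
  assumes "sym2 A" "det A < 0"
  shows "\<exists>Y \<in> hyp_plane. mink Y A = 0"
proof -
  obtain al be ga where A: "A = M2 al be be ga"
    using assms(1) by (cases A rule: M2_cases) auto
  define D where "D = det A"
  define m where "m = (al + ga)/2"
  have D: "D < 0" and D0: "D \<noteq> 0" using assms(2) by (simp_all add: D_def)
  have mIA: "mink (M2 1 0 0 1) A = m" by (simp add: A m_def)
  define Y where "Y = 1 *\<^sub>R M2 1 0 0 1 + (-m/D) *\<^sub>R A"
  have "det Y = 1 - m^2/D"
    unfolding Y_def det_add_scaleR using D0 by (simp add: mIA D_def field_simps power2_eq_square)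
  moreover have "m^2/D \<le> 0" using D by (intro divide_nonneg_neg) auto
  ultimately have dpos: "det Y > 0" by linarith
  have "Y$1$1 + Y$2$2 = 2 - 2*m^2/D"
    using D0 by (simp add: Y_def A m_def field_simps power2_eq_square)
  then have "Y$1$1 + Y$2$2 > 0" using \<open>m^2/D \<le> 0\<close> by linarith
  moreover have "Y$1$1 * Y$2$2 > 0"
  proof -
    have "det Y = Y$1$1 * Y$2$2 - Y$1$2 * Y$1$2" by (simp add: Y_def A det_2)
    then show ?thesis using dpos zero_le_square[of "Y$1$2"] by linarith
  qed
  ultimately have "Y$1$1 > 0" by (auto simp: zero_less_mult_iff)
  moreover have "sym2 Y" by (simp add: Y_def A)
  moreover have "mink Y A = 0"
    unfolding Y_def mink_add_scaleR using D0 by (simp add: mIA mink_self D_def)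
  ultimately show ?thesis
    using scaleR_in_hyp_plane[of Y] dpos mink_add_scaleR[of "1 / sqrt (det Y)" Y 0 Y A] by auto
qed

lemma transl_axis_eq:
  assumes g: "det g = 1" "\<bar>trace g\<bar> > 2"
  shows "transl_axis g = {Y \<in> hyp_plane. mink Y (axis_normal g) = 0}"
proof -
  define c0 where "c0 = (trace g)^2/2 - 1"
  have "2^2 < \<bar>trace g\<bar>^2" using g(2) by (intro power_strict_mono) auto
  then have tr: "(trace g)^2 > 4" by simp
  then have c0: "c0 > 1" by (simp add: c0_def)
  have disp: "hdist Y (act g Y) = arcosh (c0 + 2 * (mink Y (axis_normal g))^2)" if "Y \<in> hyp_plane" for Y
    using displacement_identity[OF g(1), of Y] that by (simp add: hdist_def c0_def hyp_plane_def)
  have mono: "arcosh c0 \<le> arcosh (c0 + 2 * m^2) \<and> (arcosh (c0 + 2 * m^2) = arcosh c0 \<longleftrightarrow> m = 0)"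
    for m :: real
    using c0 arcosh_real_strict_mono[of c0 "c0 + 2 * m^2"] by (cases "m = 0") auto
  have "sym2 (axis_normal g)" by (simp add: axis_normal_def)
  moreover have "det (axis_normal g) < 0" using det_axis_normal[OF g(1)] tr by simp
  ultimately obtain Y0 where Y0: "Y0 \<in> hyp_plane" "mink Y0 (axis_normal g) = 0"
    using ex_hyp_plane_mink_eq_0 by blast
  have inf: "(INF Y\<in>hyp_plane. hdist Y (act g Y)) = arcosh c0"
  proof (rule cInf_eq_minimum)
    show "arcosh c0 \<in> (\<lambda>Y. hdist Y (act g Y)) ` hyp_plane"
      using disp[OF Y0(1)] Y0 by (auto intro!: image_eqI[of _ _ Y0])
  qed (use disp mono in auto)
  show ?thesis
    unfolding transl_axis_def inf using disp mono by auto
qed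

text \<open>Pushing \<open>p\<close> slightly along \<open>u\<close> and renormalising gives a point of the geodesic, on which
\<open>mink _ M\<close> vanishes.\<close>

lemma tangent_mink_eq_0:
  assumes geod: "geod M = {Y \<in> hyp_plane. mink Y A = 0}" and p: "p \<in> geod M"
    and u: "sym2 u" "mink u p = 0" "mink u A = 0"
  shows "mink u M = 0"
proof -
  have p': "p \<in> hyp_plane" "mink p M = 0" "mink p A = 0"
    using p geod by (auto simp: geod_def)
  define t where "t = 1 / (\<bar>u$1$1\<bar> / p$1$1 + \<bar>det u\<bar> + 1)"
  have p11: "p$1$1 > 0" using p' by (simp add: hyp_plane_def)
  have nn: "0 \<le> \<bar>u$1$1\<bar> / p$1$1 + \<bar>det u\<bar>" using p11 by simp
  then have den: "\<bar>u$1$1\<bar> / p$1$1 + \<bar>det u\<bar> + 1 > 0" by linarith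
  have t: "t > 0" "t \<le> 1" using nn den by (simp_all add: t_def)
  have "t * \<bar>u$1$1\<bar> < p$1$1"
    using den p11 by (simp add: t_def field_simps add_pos_nonneg)
  have "t * \<bar>det u\<bar> < 1"
    using den p11 by (simp add: t_def field_simps add_pos_nonneg)
  define Y where "Y = 1 *\<^sub>R p + t *\<^sub>R u"
  have "det Y = 1 + t^2 * det u"
    unfolding Y_def det_add_scaleR using p' u(2) by (simp add: mink_sym hyp_plane_def)
  moreover have "t^2 * \<bar>det u\<bar> \<le> t * \<bar>det u\<bar>"
    using t mult_left_le_one_le[of "\<bar>det u\<bar>" t] by (simp add: power2_eq_square)
  moreover have "t^2 * (- \<bar>det u\<bar>) \<le> t^2 * det u" by (rule mult_left_mono) simp_all
  ultimately have "det Y > 0" using \<open>t * \<bar>det u\<bar> < 1\<close> by linarith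
  moreover have "Y$1$1 > 0"
  proof -
    have "t * (- \<bar>u$1$1\<bar>) \<le> t * u$1$1" using t by (intro mult_left_mono) simp_all
    then show ?thesis using \<open>t * \<bar>u$1$1\<bar> < p$1$1\<close> by (simp add: Y_def)
  qed
  moreover have "sym2 Y"
    using p' u(1) by (cases p rule: M2_cases, cases u rule: M2_cases) (simp add: Y_def hyp_plane_def)
  ultimately have "(1 / sqrt (det Y)) *\<^sub>R Y \<in> hyp_plane" using scaleR_in_hyp_plane by blast
  define s where "s = 1 / sqrt (det Y)"
  have s: "s > 0" using \<open>det Y > 0\<close> by (simp add: s_def)
  have Z: "s *\<^sub>R Y = s *\<^sub>R p + (s * t) *\<^sub>R u" by (simp add: Y_def scaleR_add_right)
  have "mink (s *\<^sub>R Y) A = 0" unfolding Z mink_add_scaleR using p'(3) u(3) by simp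
  then have "s *\<^sub>R Y \<in> geod M"
    using geod \<open>(1 / sqrt (det Y)) *\<^sub>R Y \<in> hyp_plane\<close> by (simp add: s_def)
  then have "mink (s *\<^sub>R Y) M = 0" by (simp add: geod_def)
  then have "(s * t) * mink u M = 0" unfolding Z mink_add_scaleR using p'(2) by simp
  then show ?thesis using s t by simp
qed

lemma SQ_N_std_subset: "SQ N_std \<subseteq> SQ_std"
proof
  fix g assume "g \<in> SQ N_std"
  then obtain M q where g1: "det g = 1" "\<bar>trace g\<bar> > 2" and M: "transl_axis g = geod M" "orth_geod M N_std"
    and q: "q \<in> transl_axis g" "q \<in> geod N_std" "act g q \<in> pos_side N_std"
    unfolding SQ_def hyperbolic_el_def SL2_def by blast
  note axis = transl_axis_eq[OF g1]
  obtain a b c d where g: "g = M2 a b c d" by (rule M2_cases)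
  define P where "P = (a - d)/2"
  have A: "axis_normal g = M2 (-b) P P c" by (simp add: g axis_normal_def P_def)
  have on_axis: "\<exists>x z. p = M2 x 0 0 z \<and> x > 0 \<and> x * z = 1 \<and> x * c = z * b"
    if "p \<in> transl_axis g" "p \<in> geod N_std" for p
  proof -
    obtain x y y' z where p: "p = M2 x y y' z" by (rule M2_cases)
    have "p \<in> hyp_plane" "mink p (axis_normal g) = 0" "mink p N_std = 0"
      using that axis by (auto simp: geod_def)
    then have "y = y'" "x*z - y*y' = 1" "x > 0" "y + y' = 0" "x*c - z*b = 0"
      by (auto simp: p hyp_plane_M2 mink_N_std A)
    then show ?thesis using p by auto
  qed
  from M(2) obtain p where p: "p \<in> geod M \<inter> geod N_std" and perp: "\<forall>u w.
      sym2 u \<and> mink u p = 0 \<and> mink u M = 0 \<and> sym2 w \<and> mink w p = 0 \<and> mink w N_std = 0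
      \<longrightarrow> mink u w = 0" unfolding orth_geod_def by blast
  obtain x z where xz: "p = M2 x 0 0 z" "x > 0" "x * z = 1" "x * c = z * b"
    using on_axis p M(1) by blast
  text \<open>\<open>u\<close> is tangent to the axis and \<open>w\<close> to \<open>geod N_std\<close> at \<open>p\<close>.\<close>
  define u where "u = M2 (x*P) (x*c) (x*c) (-P*z)"
  define w where "w = M2 x 0 0 (-z)"
  have "mink u (axis_normal g) = P*(z*b - x*c)/2" by (simp add: u_def A algebra_simps)
  then have "mink u M = 0"
    using tangent_mink_eq_0[of M "axis_normal g" p u] axis M(1) p xz(4)
    by (simp add: u_def xz(1) algebra_simps)
  then have "mink u w = 0"
    using perp[rule_format, of u w] by (simp add: u_def w_def xz(1) N_std_def algebra_simps)
  moreover have "mink u w = - P * (x * z)" by (simp add: u_def w_def algebra_simps)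
  ultimately have "a = d" using xz(3) by (simp add: P_def)
  obtain x' z' where xz': "q = M2 x' 0 0 z'" "x' > 0" "x' * z' = 1" "x' * c = z' * b"
    using on_axis[OF q(1,2)] by blast
  have "mink (act g q) N_std > 0" using q(3) by (simp add: pos_side_def)
  then have "a * (x' * c) + a * (z' * b) > 0"
    using \<open>a = d\<close> by (simp add: g xz'(1) N_std_def algebra_simps)
  then have "a * c * x' > 0" using xz'(4) by (simp add: algebra_simps)
  moreover have "b = x' * (x' * c)"
  proof -
    have "b = (x' * z') * b" using xz'(3) by simp
    also have "\<dots> = x' * (x' * c)" using xz'(4) by (simp add: mult.assoc)
    finally show ?thesis .
  qed
  ultimately have "a * b = (a * c * x') * x'" by (simp add: algebra_simps)
  with \<open>a * c * x' > 0\<close> have "a * b > 0" using mult_pos_pos xz'(2) by metis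
  then show "g \<in> SQ_std" using g1 \<open>a = d\<close> by (simp add: SQ_std_def g)
qed

lemma SQ_std_subset: "SQ_std \<subseteq> SQ N_std"
proof
  fix g assume "g \<in> SQ_std"
  obtain a b c d where g: "g = M2 a b c d" by (rule M2_cases)
  have h: "d = a" "a*a - b*c = 1" "\<bar>a\<bar> > 1" "a*b > 0"
    using \<open>g \<in> SQ_std\<close> by (auto simp: SQ_std_def g)
  have "a*a > 1" using h(3) by (metis abs_mult_self_eq less_1_mult order_less_trans zero_less_one abs_ge_zero not_less)
  then have bc: "b*c > 0" using h(2) by linarith
  have g1: "det g = 1" "\<bar>trace g\<bar> > 2" using h by (auto simp: g)
  have A: "axis_normal g = M2 (-b) 0 0 c" using h(1) by (simp add: g axis_normal_def)
  text \<open>The axis meets \<open>geod N_std\<close> at \<open>p = diag (x, 1/x)\<close> with \<open>x\<^sup>2 = b/c\<close>.\<close>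
  define x where "x = sqrt (b/c)"
  have bdc: "b/c > 0" using bc by (metis divide_pos_pos zero_less_mult_iff divide_neg_neg)
  then have x0: "x > 0" by (simp add: x_def)
  have "x*x = \<bar>b/c\<bar>" unfolding x_def by (rule real_sqrt_mult_self)
  then have "x*x = b/c" using abs_of_pos[OF bdc] by simp
  then have xxc: "x*x*c = b" using bc by auto
  define z where "z = 1/x"
  have xz: "x*z = 1" using x0 by (simp add: z_def)
  have xcz: "x*c = z*b"
  proof -
    have "z*b = z*(x*x*c)" using xxc by simp
    also have "\<dots> = (x*z)*(x*c)" by (simp add: algebra_simps)
    finally show ?thesis using xz by simp
  qed
  define M where "M = (1 / sqrt (b*c)) *\<^sub>R axis_normal g"
  have M: "spacelike_unit M"
    using bc by (auto simp: spacelike_unit_def M_def det_scaleR_mat2 A power_divide sym2_def)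
  have mink_M: "mink Y M = 0 \<longleftrightarrow> mink Y (axis_normal g) = 0" for Y
    using bc by (auto simp: M_def mink_scaleR_right)
  have axis: "transl_axis g = geod M"
    using transl_axis_eq[OF g1] by (auto simp: geod_def mink_M)
  define p where "p = M2 x 0 0 z"
  have p: "p \<in> geod M" "p \<in> geod N_std"
    using x0 xz xcz by (auto simp: p_def hyp_plane_M2 geod_def mink_M A N_std_def)
  have "orth_geod M N_std"
    unfolding orth_geod_def
  proof (intro bexI allI impI)
    fix u w
    assume H: "sym2 u \<and> mink u p = 0 \<and> mink u M = 0 \<and> sym2 w \<and> mink w p = 0 \<and> mink w N_std = 0"
    obtain u1 u2 u3 where u: "u = M2 u1 u2 u2 u3" using H by (cases u rule: M2_cases) auto
    obtain w1 w3 where w: "w = M2 w1 0 0 w3" using H by (cases w rule: M2_cases) (auto simp: N_std_def)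
    have e: "u1*z + u3*x = 0" "u1*c = u3*b" using H by (auto simp: u p_def mink_M A)
    have "u1 = - u3*(x*x)"
    proof -
      have "x*(u1*z + u3*x) = 0" using e(1) by simp
      then have "u1*(x*z) + u3*(x*x) = 0" by (simp add: algebra_simps)
      then show ?thesis using xz by simp
    qed
    then have "u3*(x*x*c + b) = 0" using e(2) by (simp add: algebra_simps)
    then have "u3*(2*b) = 0" using xxc by simp
    then have "u3 = 0" "u1 = 0" using bc \<open>u1 = - u3*(x*x)\<close> by auto
    then show "mink u w = 0" by (simp add: u w)
  qed (use p in simp)
  moreover have "act g p \<in> pos_side N_std"
  proof -
    have "(a*b)*(b*c) > 0" using h(4) bc by simp
    then have "(a*c)*(b*b) > 0" by (simp add: algebra_simps)
    then have "a*c > 0" by (simp add: zero_less_mult_iff)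
    moreover have "mink (act g p) N_std = 2*(a*c)*x"
      using h(1) xcz by (simp add: g p_def N_std_def algebra_simps)
    ultimately show ?thesis
      using act_in_hyp_plane[of p g] p x0 g1 by (simp add: pos_side_def geod_def)
  qed
  ultimately show "g \<in> SQ N_std"
    using M axis p g1 unfolding SQ_def hyperbolic_el_def SL2_def by blast
qed

lemma SQ_N_std: "SQ N_std = SQ_std"
  using SQ_N_std_subset SQ_std_subset by blast

section \<open>Transversality\<close>

lemma surf_tangent_in_kernel:
  fixes f :: "mat2 \<Rightarrow> real"
  assumes f: "bounded_linear f" and S: "S \<subseteq> {g. f g = 0}" and v: "v \<in> surf_tangent S p"
  shows "f v = 0"
proof -
  from v obtain \<gamma> e where e: "0 < e" "\<forall>s. \<bar>s\<bar> < e \<longrightarrow> \<gamma> s \<in> S"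
    and d: "(\<gamma> has_vector_derivative v) (at 0)"
    unfolding surf_tangent_def by blast
  have "((\<lambda>s. f (\<gamma> s)) has_field_derivative f v) (at 0)"
    using bounded_linear.has_vector_derivative[OF f d]
    by (simp add: has_real_derivative_iff_has_vector_derivative)
  moreover have "f (\<gamma> s) = 0" if "\<bar>s\<bar> < e" for s
    using e(2) S that by blast
  then have "\<forall>s. \<bar>0 - s\<bar> < e \<longrightarrow> f (\<gamma> 0) = f (\<gamma> s)"
    using e(1) by simp
  ultimately show ?thesis using DERIV_local_const e(1) by blast
qed

lemma meets_transv_line_iff:
  fixes f :: "mat2 \<Rightarrow> real"
  assumes f: "bounded_linear f" and S: "S \<subseteq> {g. f g = 0}" and v: "f v \<noteq> 0"
  shows "meets_transv (\<lambda>t. h0 + t *\<^sub>R v) S \<longleftrightarrow> (\<exists>t>0. h0 + t *\<^sub>R v \<in> S)"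
proof -
  have "((\<lambda>t. h0 + t *\<^sub>R v) has_vector_derivative v) (at t)" for t
    by (auto intro!: derivative_eq_intros simp: has_vector_derivative_def)
  then have "(\<lambda>t. h0 + t *\<^sub>R v) differentiable (at t) \<and>
      vector_derivative (\<lambda>t. h0 + t *\<^sub>R v) (at t) \<notin> surf_tangent S (h0 + t *\<^sub>R v)" for t
    using surf_tangent_in_kernel[OF f S] v by (metis differentiableI_vector vector_derivative_at)
  then show ?thesis unfolding meets_transv_def by blast
qed

lemma surf_tangent_linear_image:
  assumes L: "linear L" and v: "v \<in> surf_tangent S p"
  shows "L v \<in> surf_tangent (L ` S) (L p)"
proof -
  from v obtain \<gamma> e where e: "0 < e" "\<gamma> 0 = p" "\<forall>s. \<bar>s\<bar> < e \<longrightarrow> \<gamma> s \<in> S"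
    and d: "(\<gamma> has_vector_derivative v) (at 0)"
    unfolding surf_tangent_def by blast
  have "((\<lambda>s. L (\<gamma> s)) has_vector_derivative L v) (at 0)"
    using bounded_linear.has_vector_derivative[OF _ d] L linear_conv_bounded_linear by blast
  then show ?thesis unfolding surf_tangent_def using e
    by (intro CollectI exI[of _ "\<lambda>s. L (\<gamma> s)"] exI[of _ e]) auto
qed

lemma meets_transv_linear_image:
  assumes L: "linear L" "linear Li" "\<And>x. Li (L x) = x"
    and m: "meets_transv c S"
  shows "meets_transv (\<lambda>t. L (c t)) (L ` S)"
proof -
  have bl: "bounded_linear L" using L(1) linear_conv_bounded_linear by blast
  have "(\<lambda>t. L (c t)) differentiable (at t) \<and>
     vector_derivative (\<lambda>t. L (c t)) (at t) \<notin> surf_tangent (L ` S) (L (c t))"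
    if t: "t > 0" "L (c t) \<in> L ` S" for t
  proof -
    have "c t \<in> S" using t(2) L(3) by (metis imageE)
    then have cd: "c differentiable (at t)" and nt: "vector_derivative c (at t) \<notin> surf_tangent S (c t)"
      using m t(1) unfolding meets_transv_def by blast+
    have D: "((\<lambda>t. L (c t)) has_vector_derivative L (vector_derivative c (at t))) (at t)"
      using bounded_linear.has_vector_derivative[OF bl] cd vector_derivative_works by blast
    have img: "Li ` L ` S = S" using L(3) by (simp add: image_image)
    have "L (vector_derivative c (at t)) \<notin> surf_tangent (L ` S) (L (c t))"
    proof
      assume "L (vector_derivative c (at t)) \<in> surf_tangent (L ` S) (L (c t))"
      from surf_tangent_linear_image[OF L(2) this] show False using nt img L(3) by simp
    qed
    moreover have "vector_derivative (\<lambda>t. L (c t)) (at t) = L (vector_derivative c (at t))"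
      using D by (rule vector_derivative_at)
    ultimately show ?thesis using D differentiableI_vector by metis
  qed
  moreover have "\<exists>t>0. L (c t) \<in> L ` S" using m unfolding meets_transv_def by blast
  ultimately show ?thesis unfolding meets_transv_def by blast
qed

lemma meets_transv_linear_image_iff:
  assumes L: "linear L" "linear Li" "\<And>x. Li (L x) = x" "\<And>y. L (Li y) = y"
  shows "meets_transv (\<lambda>t. L (c t)) (L ` S) \<longleftrightarrow> meets_transv c S"
proof
  assume "meets_transv (\<lambda>t. L (c t)) (L ` S)"
  from meets_transv_linear_image[OF L(2,1) L(4) this] show "meets_transv c S"
    using L(3) by (simp add: image_image)
qed (rule meets_transv_linear_image[OF L(1-3)])

section \<open>Rays through the standard stem quadrant\<close>

definition diag_defect :: "mat2 \<Rightarrow> real" where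
  "diag_defect g = g$1$1 - g$2$2"

lemma bounded_linear_entry: "bounded_linear (\<lambda>g::mat2. g$i$j)"
  using bounded_linear_compose[OF bounded_linear_vec_nth[of j] bounded_linear_vec_nth[of i]]
  by (simp add: o_def)

lemma bounded_linear_diag_defect: "bounded_linear diag_defect"
  unfolding diag_defect_def by (intro bounded_linear_sub bounded_linear_entry)

lemma diag_defect_M2 [simp]: "diag_defect (M2 a b c d) = a - d"
  by (simp add: diag_defect_def)

lemma SQ_std_subset_diag: "SQ_std \<subseteq> {g. diag_defect g = 0}"
  by (auto simp: SQ_std_def diag_defect_def)

lemma SQ_std_intro:
  assumes "det g = 1" "diag_defect g = 0" "g$1$1 * S < 0" "g$1$2 * S < 0" "g$2$1 * S < 0"
  shows "g \<in> SQ_std"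
proof -
  have "g$1$1 * g$1$2 > 0 \<and> g$1$2 * g$2$1 > 0"
  proof (cases "S > 0")
    case True
    then have "g$1$1 < 0" "g$1$2 < 0" "g$2$1 < 0" using assms(3-5) by (auto simp: mult_less_0_iff)
    then show ?thesis by (simp add: mult_neg_neg)
  next
    case False
    then have "S < 0" using assms(3) by (cases "S = 0") auto
    then have "g$1$1 > 0" "g$1$2 > 0" "g$2$1 > 0" using assms(3-5) by (auto simp: mult_less_0_iff)
    then show ?thesis by simp
  qed
  moreover have "g$1$1 * g$1$1 = 1 + g$1$2 * g$2$1"
    using assms(1,2) by (simp add: det_2 diag_defect_def)
  ultimately have "g$1$1 * g$1$1 > 1" by simp
  then have "\<bar>g$1$1\<bar> > 1" by (metis abs_square_le_1 not_le power2_eq_square)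
  then show ?thesis using assms(1,2) \<open>g$1$1 * g$1$2 > 0 \<and> _\<close> by (simp add: SQ_std_def diag_defect_def)
qed

text \<open>Sign pattern of a matrix \<open>K\<close> expressing that \<open>geod N_std\<close> and \<open>geod (act K N_std)\<close> have disjoint
closures and are oriented away from each other (see \<open>away_signs_frame\<close>).\<close>

definition away_signs :: "mat2 \<Rightarrow> bool" where
  "away_signs K \<longleftrightarrow> K$2$1 * K$2$2 > 0 \<and> K$1$1 * K$1$2 > 0 \<and> K$1$1 * K$2$1 < 0 \<and> K$1$2 * K$2$2 < 0"

definition entries_dominated :: "mat2 \<Rightarrow> mat2 \<Rightarrow> bool" where
  "entries_dominated H K \<longleftrightarrow> (\<forall>i j. (H$i$j)^2 < (K$i$j)^2)"

lemma away_signs_M2 [simp]: "away_signs (M2 a b c d) \<longleftrightarrow> c*d > 0 \<and> a*b > 0 \<and> a*c < 0 \<and> b*d < 0"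
  by (simp add: away_signs_def)

lemma entries_dominated_M2 [simp]:
  "entries_dominated (M2 p q r w) (M2 a b c d) \<longleftrightarrow> p^2 < a^2 \<and> q^2 < b^2 \<and> r^2 < c^2 \<and> w^2 < d^2"
  by (auto simp: entries_dominated_def forall_2)

lemma away_signs_adj2: "away_signs K \<Longrightarrow> away_signs (adj2 K)"
  by (cases K rule: M2_cases) (simp add: algebra_simps)

lemma entries_dominated_adj2: "entries_dominated H K \<Longrightarrow> entries_dominated (adj2 H) (adj2 K)"
  by (cases H rule: M2_cases, cases K rule: M2_cases) auto

text \<open>On the line \<open>H P(s) K\<^sup>-\<^sup>1\<close> with \<open>P(s)\<close> upper unipotent, the only point on the diagonal hyperplane
lies in the stem quadrant: multiplied by \<open>S = h\<^sub>1 k\<^sub>3 + h\<^sub>3 k\<^sub>1\<close> its entries become the negative numbers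
\<open>k\<^sub>1 k\<^sub>3 + h\<^sub>1 h\<^sub>3\<close>, \<open>h\<^sub>1\<^sup>2 - k\<^sub>1\<^sup>2\<close>, \<open>h\<^sub>3\<^sup>2 - k\<^sub>3\<^sup>2\<close>.\<close>

lemma crossing_upper_in_SQ_std:
  assumes "det H = 1" "det K = 1" "away_signs H" "away_signs K" "entries_dominated H K"
    and "diag_defect (H ** M2 1 s 0 1 ** adj2 K) = 0"
  shows "H ** M2 1 s 0 1 ** adj2 K \<in> SQ_std"
proof -
  obtain h1 h2 h3 h4 where H: "H = M2 h1 h2 h3 h4" by (rule M2_cases)
  obtain k1 k2 k3 k4 where K: "K = M2 k1 k2 k3 k4" by (rule M2_cases)
  have dets: "h1*h4 - h2*h3 = 1" "k1*k4 - k2*k3 = 1"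
    and cross: "h1*k4 - (h1 * s + h2)*k3 = -h3*k2 + (h3 * s + h4)*k1"
    using assms by (simp_all add: H K algebra_simps)
  show ?thesis
  proof (rule SQ_std_intro[where S = "h1*k3 + h3*k1"])
    have "(h1*k4 - (h1 * s + h2)*k3) * (h1*k3 + h3*k1) = k1*k3 + h1*h3"
      using dets cross by algebra
    moreover have "k1*k3 + h1*h3 < 0" using assms(3,4) by (simp add: H K)
    ultimately show "(H ** M2 1 s 0 1 ** adj2 K)$1$1 * (h1*k3 + h3*k1) < 0"
      by (simp add: H K algebra_simps)
    have "(-h1*k2 + (h1 * s + h2)*k1) * (h1*k3 + h3*k1) = h1^2 - k1^2"
      using dets cross by algebra
    moreover have "h1^2 - k1^2 < 0" using assms(5) by (simp add: H K)
    ultimately show "(H ** M2 1 s 0 1 ** adj2 K)$1$2 * (h1*k3 + h3*k1) < 0"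
      by (simp add: H K algebra_simps)
    have "(h3*k4 - (h3 * s + h4)*k3) * (h1*k3 + h3*k1) = h3^2 - k3^2"
      using dets cross by algebra
    moreover have "h3^2 - k3^2 < 0" using assms(5) by (simp add: H K)
    ultimately show "(H ** M2 1 s 0 1 ** adj2 K)$2$1 * (h1*k3 + h3*k1) < 0"
      by (simp add: H K algebra_simps)
  qed (use assms in \<open>simp_all add: det_mul\<close>)
qed

lemma crossing_lower_in_SQ_std:
  assumes "det H = 1" "det K = 1" "away_signs H" "away_signs K" "entries_dominated H K"
    and "diag_defect (H ** M2 1 0 s 1 ** adj2 K) = 0"
  shows "H ** M2 1 0 s 1 ** adj2 K \<in> SQ_std"
proof -
  obtain h1 h2 h3 h4 where H: "H = M2 h1 h2 h3 h4" by (rule M2_cases)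
  obtain k1 k2 k3 k4 where K: "K = M2 k1 k2 k3 k4" by (rule M2_cases)
  have dets: "h1*h4 - h2*h3 = 1" "k1*k4 - k2*k3 = 1"
    and cross: "(h1 + h2 * s)*k4 - h2*k3 = -(h3 + h4 * s)*k2 + h4*k1"
    using assms by (simp_all add: H K algebra_simps)
  show ?thesis
  proof (rule SQ_std_intro[where S = "h2*k4 + h4*k2"])
    have "((h1 + h2 * s)*k4 - h2*k3) * (h2*k4 + h4*k2) = k2*k4 + h2*h4"
      using dets cross by algebra
    moreover have "k2*k4 + h2*h4 < 0" using assms(3,4) by (simp add: H K)
    ultimately show "(H ** M2 1 0 s 1 ** adj2 K)$1$1 * (h2*k4 + h4*k2) < 0"
      by (simp add: H K algebra_simps)
    have "(-(h1 + h2 * s)*k2 + h2*k1) * (h2*k4 + h4*k2) = h2^2 - k2^2"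
      using dets cross by algebra
    moreover have "h2^2 - k2^2 < 0" using assms(5) by (simp add: H K)
    ultimately show "(H ** M2 1 0 s 1 ** adj2 K)$1$2 * (h2*k4 + h4*k2) < 0"
      by (simp add: H K algebra_simps)
    have "((h3 + h4 * s)*k4 - h4*k3) * (h2*k4 + h4*k2) = h4^2 - k4^2"
      using dets cross by algebra
    moreover have "h4^2 - k4^2 < 0" using assms(5) by (simp add: H K)
    ultimately show "(H ** M2 1 0 s 1 ** adj2 K)$2$1 * (h2*k4 + h4*k2) < 0"
      by (simp add: H K algebra_simps)
  qed (use assms in \<open>simp_all add: det_mul\<close>)
qed

lemma away_signs_cross_terms_pos:
  assumes "away_signs (M2 h1 h2 h3 h4)" "away_signs (M2 k1 k2 k3 k4)"
  shows "(h1*k3 + h3*k1) * (h2*k4 + h4*k2) > 0"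
proof -
  have signs: "h3*h4 > 0" "k3*k4 > 0" "h1*h3 < 0" "h2*h4 < 0" "k1*k3 < 0" "k2*k4 < 0"
    using assms by simp_all
  then have squares: "h3*h3 > 0" "k3*k3 > 0" "h4*h4 > 0" "k4*k4 > 0"
    by (auto simp: zero_less_mult_iff)
  have "(h1*k3 + h3*k1) * (h3*k3) = (h1*h3)*(k3*k3) + (h3*h3)*(k1*k3)"
    by (simp add: algebra_simps)
  also have "\<dots> < 0" using signs squares by (simp add: add_neg_neg mult_neg_pos mult_pos_neg)
  finally have neg1: "(h1*k3 + h3*k1) * (h3*k3) < 0" .
  have "(h2*k4 + h4*k2) * (h4*k4) = (h2*h4)*(k4*k4) + (h4*h4)*(k2*k4)"
    by (simp add: algebra_simps)
  also have "\<dots> < 0" using signs squares by (simp add: add_neg_neg mult_neg_pos mult_pos_neg)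
  finally have neg2: "(h2*k4 + h4*k2) * (h4*k4) < 0" .
  have "0 < ((h1*k3 + h3*k1) * (h3*k3)) * ((h2*k4 + h4*k2) * (h4*k4))"
    using neg1 neg2 by (rule mult_neg_neg)
  also have "\<dots> = ((h1*k3 + h3*k1) * (h2*k4 + h4*k2)) * ((h3*h4) * (k3*k4))"
    by (simp add: algebra_simps)
  finally show ?thesis using zero_less_mult_pos2 mult_pos_pos[OF signs(1,2)] by blast
qed

lemma ex_pos_root_iff:
  fixes a b :: real
  assumes "b \<noteq> 0"
  shows "(\<exists>t>0. a + t * b = 0) \<longleftrightarrow> a * b < 0"
proof
  assume "\<exists>t>0. a + t * b = 0"
  then obtain t where t: "t > 0" "a + t * b = 0" by blast
  have "a * b = (a + t * b) * b - t * (b * b)" by (simp add: algebra_simps)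
  then have "a * b = - (t * (b * b))" using t(2) by simp
  moreover have "b * b > 0" using assms not_real_square_gt_zero by blast
  ultimately show "a * b < 0" using t(1) by (simp add: mult_pos_pos)
next
  assume "a * b < 0"
  then have "- a / b > 0" using assms by (auto simp: divide_less_0_iff mult_less_0_iff)
  moreover have "a + (- a / b) * b = 0" using assms by simp
  ultimately show "\<exists>t>0. a + t * b = 0" by blast
qed

lemma meets_transv_line_SQ_std_iff:
  assumes v: "diag_defect v \<noteq> 0"
    and cross: "\<And>t. diag_defect (h0 + t *\<^sub>R v) = 0 \<Longrightarrow> h0 + t *\<^sub>R v \<in> SQ_std"
  shows "meets_transv (\<lambda>t. h0 + t *\<^sub>R v) SQ_std \<longleftrightarrow> diag_defect h0 * diag_defect v < 0"
proof -
  have defect: "diag_defect (h0 + t *\<^sub>R v) = diag_defect h0 + t * diag_defect v" for t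
    by (simp add: diag_defect_def algebra_simps)
  have "h0 + t *\<^sub>R v \<in> SQ_std \<longleftrightarrow> diag_defect h0 + t * diag_defect v = 0" for t
    using cross[of t] SQ_std_subset_diag by (auto simp: defect)
  then have "(\<exists>t>0. h0 + t *\<^sub>R v \<in> SQ_std) \<longleftrightarrow> (\<exists>t>0. diag_defect h0 + t * diag_defect v = 0)"
    by simp
  then show ?thesis
    using meets_transv_line_iff[OF bounded_linear_diag_defect SQ_std_subset_diag v] ex_pos_root_iff[OF v]
    by simp
qed

lemma exactly_one3_signs:
  fixes x y z :: real
  assumes "y * z < 0"
  shows "exactly_one3 (x = 0) (x * y < 0) (x * z < 0)"
  using assms by (auto simp: exactly_one3_def mult_less_0_iff)

lemma par_curve_M2: "par_curve (M2 x y z w) t = M2 (1 + t*x) (t*y) (t*z) (1 + t*w)"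
  by (simp add: par_curve_def M2_mat1)

lemma mult_par_curve_mult:
  fixes A X B :: mat2
  shows "A ** par_curve X t ** B = A ** B + t *\<^sub>R (A ** X ** B)"
  by (cases A rule: M2_cases, cases X rule: M2_cases, cases B rule: M2_cases)
     (simp add: par_curve_M2 algebra_simps)

text \<open>The heart of the theorem, in the frame of \<open>N_std\<close>: the position of \<open>H K\<^sup>-\<^sup>1\<close> relative to the
diagonal hyperplane decides which of the two rays reaches \<open>SQ_std\<close>, because the rays leave that
hyperplane in opposite directions.\<close>

lemma exactly_one_std:
  assumes "det H = 1" "det K = 1" "away_signs H" "away_signs K" "entries_dominated H K"
    and "\<beta> > 0" "\<gamma> > 0"
  shows "exactly_one3 (H ** adj2 K \<in> SQ_std)
     (meets_transv (\<lambda>t. H ** par_curve (M2 0 \<beta> 0 0) t ** adj2 K) SQ_std)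
     (meets_transv (\<lambda>t. H ** par_curve (M2 0 0 \<gamma> 0) t ** adj2 K) SQ_std)"
proof -
  define v1 where "v1 = H ** M2 0 \<beta> 0 0 ** adj2 K"
  define v2 where "v2 = H ** M2 0 0 \<gamma> 0 ** adj2 K"
  have cross1: "H ** adj2 K + t *\<^sub>R v1 \<in> SQ_std" if "diag_defect (H ** adj2 K + t *\<^sub>R v1) = 0" for t
    using crossing_upper_in_SQ_std[OF assms(1-5), of "t * \<beta>"] that
    unfolding v1_def by (simp add: mult_par_curve_mult[symmetric] par_curve_M2)
  have cross2: "H ** adj2 K + t *\<^sub>R v2 \<in> SQ_std" if "diag_defect (H ** adj2 K + t *\<^sub>R v2) = 0" for t
    using crossing_lower_in_SQ_std[OF assms(1-5), of "t * \<gamma>"] that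
    unfolding v2_def by (simp add: mult_par_curve_mult[symmetric] par_curve_M2)
  obtain h1 h2 h3 h4 where H: "H = M2 h1 h2 h3 h4" by (rule M2_cases)
  obtain k1 k2 k3 k4 where K: "K = M2 k1 k2 k3 k4" by (rule M2_cases)
  have "diag_defect v1 * diag_defect v2 = - ((\<beta> * \<gamma>) * ((h1*k3 + h3*k1) * (h2*k4 + h4*k2)))"
    by (simp add: v1_def v2_def H K algebra_simps)
  moreover have "(h1*k3 + h3*k1) * (h2*k4 + h4*k2) > 0"
    using away_signs_cross_terms_pos assms(3,4) by (simp add: H K)
  moreover have "\<beta> * \<gamma> > 0" using assms(6,7) by simp
  ultimately have "diag_defect v1 * diag_defect v2 < 0"
    using mult_pos_pos neg_less_0_iff_less by metis
  then have "diag_defect v1 \<noteq> 0" "diag_defect v2 \<noteq> 0" by auto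
  note meets = meets_transv_line_SQ_std_iff[OF this(1) cross1] meets_transv_line_SQ_std_iff[OF this(2) cross2]
  have "H ** adj2 K \<in> SQ_std \<longleftrightarrow> diag_defect (H ** adj2 K) = 0"
    using cross1[of 0] SQ_std_subset_diag by auto
  then show ?thesis
    unfolding mult_par_curve_mult v1_def[symmetric] v2_def[symmetric]
    using exactly_one3_signs[OF \<open>diag_defect v1 * diag_defect v2 < 0\<close>] by (simp add: meets)
qed

section \<open>Frames adapted to a line\<close>

lemma act_N_std: "act (M2 p q r w) N_std = M2 (-2*p*q) (-(p*w + q*r)) (-(p*w + q*r)) (-2*r*w)"
  by (simp add: N_std_def algebra_simps)

lemma ex_frame:
  assumes "spacelike_unit N"
  shows "\<exists>k. det k = 1 \<and> N = act k N_std"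
proof -
  obtain al be ga where N: "N = M2 al be be ga" and h: "al*ga - be*be = -1"
    using assms by (cases N rule: M2_cases) (auto simp: spacelike_unit_def)
  show ?thesis
  proof (cases "al = 0")
    case False
    define k where "k = M2 1 (-al/2) ((be+1)/al) ((1-be)/2)"
    have "ga = (be*be - 1)/al" using h False by (simp add: field_simps)
    then have "det k = 1 \<and> act k N_std = N" using False by (simp add: k_def act_N_std N field_simps)
    then show ?thesis by metis
  next
    case True
    then have "be = 1 \<or> be = -1" using h by (simp add: square_eq_1_iff)
    then show ?thesis
    proof
      assume "be = 1"
      then have "det (M2 0 (-1) 1 (-ga/2)) = 1 \<and> act (M2 0 (-1) 1 (-ga/2)) N_std = N"
        using True by (simp add: act_N_std N)
      then show ?thesis by metis
    next
      assume "be = -1"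
      then have "det (M2 1 0 (-ga/2) 1) = 1 \<and> act (M2 1 0 (-ga/2) 1) N_std = N"
        using True by (simp add: act_N_std N)
      then show ?thesis by metis
    qed
  qed
qed

lemma SQ_frame_iff: "det k = 1 \<Longrightarrow> g \<in> SQ (act k N_std) \<longleftrightarrow> conj2 (adj2 k) g \<in> SQ_std"
  by (metis SQ_N_std SQ_conj2_iff conj2_conj2 adj2_adj2 det_adj2)

lemma linear_conj2: "linear (conj2 k)"
proof (rule linearI)
  show "conj2 k (X + Y) = conj2 k X + conj2 k Y" for X Y
    by (cases k rule: M2_cases, cases X rule: M2_cases, cases Y rule: M2_cases)
       (simp add: conj2_def algebra_simps)
  show "conj2 k (r *\<^sub>R X) = r *\<^sub>R conj2 k X" for r X
    by (cases k rule: M2_cases, cases X rule: M2_cases) (simp add: conj2_def algebra_simps)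
qed

lemma conj2_mult: "det k = 1 \<Longrightarrow> conj2 k (X ** Y) = conj2 k X ** conj2 k Y"
  by (simp add: conj2_def matrix_mul_assoc mult_adj2_left)
     (simp add: matrix_mul_assoc[symmetric] mult_adj2_left)

lemma par_curve_conj2: "det k = 1 \<Longrightarrow> par_curve (conj2 k Y) t = conj2 k (par_curve Y t)"
  using linear_add[OF linear_conj2] linear_scale[OF linear_conj2]
  by (simp add: par_curve_def conj2_def mult_adj2_right)

lemma meets_transv_SQ_frame_iff:
  assumes "det k = 1"
  shows "meets_transv c (SQ (act k N_std)) \<longleftrightarrow> meets_transv (\<lambda>t. conj2 (adj2 k) (c t)) SQ_std"
proof -
  have inv: "conj2 k (conj2 (adj2 k) g) = g" "conj2 (adj2 k) (conj2 k g) = g" for g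
    using conj2_conj2[of "adj2 k" g] conj2_conj2[OF assms, of g] assms by simp_all
  then have "conj2 (adj2 k) ` SQ (act k N_std) = SQ_std"
    using SQ_frame_iff[OF assms] by (auto intro: image_eqI[of _ _ "conj2 k _"])
  then show ?thesis
    using meets_transv_linear_image_iff[OF linear_conj2 linear_conj2 inv(1) inv(2), of c "SQ (act k N_std)"]
    by simp
qed

lemma closure_SQ_std_subset:
  "closure SQ_std \<subseteq> {g. g$1$1 = g$2$2 \<and> 0 \<le> g$1$1 * g$1$2 \<and> 0 \<le> g$1$1 * g$2$1}"
proof (rule closure_minimal)
  have "continuous_on UNIV (\<lambda>g::mat2. g$i$j)" for i j
    using bounded_linear_entry by (rule linear_continuous_on)
  then show "closed {g::mat2. g$1$1 = g$2$2 \<and> 0 \<le> g$1$1 * g$1$2 \<and> 0 \<le> g$1$1 * g$2$1}"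
    by (intro closed_Collect_conj closed_Collect_eq closed_Collect_le continuous_on_mult
        continuous_on_const) auto
  show "SQ_std \<subseteq> {g. g$1$1 = g$2$2 \<and> 0 \<le> g$1$1 * g$1$2 \<and> 0 \<le> g$1$1 * g$2$1}"
  proof
    fix g assume "g \<in> SQ_std"
    then have e: "g$1$1 = g$2$2" "\<bar>g$1$1\<bar> > 1" "g$1$1 * g$1$2 > 0" "det g = 1"
      by (auto simp: SQ_std_def)
    have "g$1$1 * g$1$1 = 1 + g$1$2 * g$2$1" using e(1,4) by (simp add: det_2)
    moreover have "g$1$1 * g$1$1 > 1" using e(2) by (metis abs_square_le_1 not_le power2_eq_square)
    ultimately have "g$1$2 * g$2$1 > 0" by simp
    then have "0 < (g$1$1 * g$2$1) * (g$1$2 * g$1$2)"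
      using e(3) mult_pos_pos[of "g$1$1 * g$1$2" "g$1$2 * g$2$1"] by (simp add: ac_simps)
    then have "g$1$1 * g$2$1 > 0" using zero_less_mult_pos2 not_real_square_gt_zero by (metis mult_zero_right)
    then show "g \<in> {g. g$1$1 = g$2$2 \<and> 0 \<le> g$1$1 * g$1$2 \<and> 0 \<le> g$1$1 * g$2$1}" using e by simp
  qed
qed

lemma bdry_ray_frame:
  assumes k: "det k = 1" and X: "bdry_ray (act k N_std) X"
  shows "(\<exists>\<beta>>0. conj2 (adj2 k) X = M2 0 \<beta> 0 0) \<or> (\<exists>\<gamma>>0. conj2 (adj2 k) X = M2 0 0 \<gamma> 0)"
proof -
  define Y where "Y = conj2 (adj2 k) X"
  have dk: "det (adj2 k) = 1" using k by simp
  have "closure (SQ (act k N_std)) \<subseteq> conj2 (adj2 k) -` closure SQ_std"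
  proof (rule closure_minimal)
    show "SQ (act k N_std) \<subseteq> conj2 (adj2 k) -` closure SQ_std"
      using SQ_frame_iff[OF k] closure_subset by auto
    show "closed (conj2 (adj2 k) -` closure SQ_std)"
      using linear_conj2 linear_continuous_at linear_conv_bounded_linear
      by (intro continuous_closed_vimage) auto
  qed
  moreover have "par_curve X 1 \<in> closure (SQ (act k N_std))"
    using X by (simp add: bdry_ray_def)
  moreover have "conj2 (adj2 k) (par_curve X 1) = mat 1 + Y"
    using par_curve_conj2[OF dk, of X 1] by (simp add: Y_def par_curve_def)
  ultimately have "mat 1 + Y \<in> closure SQ_std" by auto
  then have C: "mat 1 + Y \<in> {g. g$1$1 = g$2$2 \<and> 0 \<le> g$1$1 * g$1$2 \<and> 0 \<le> g$1$1 * g$2$1}"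
    using closure_SQ_std_subset by blast
  have YY: "Y ** Y = 0"
    using X conj2_mult[OF dk, of X X] by (simp add: Y_def bdry_ray_def conj2_def)
  have "Y \<noteq> 0"
    using X conj2_conj2[OF dk, of X] by (auto simp: Y_def bdry_ray_def conj2_def)
  obtain y1 y2 y3 y4 where Ye: "Y = M2 y1 y2 y3 y4" by (rule M2_cases)
  have c: "y1 = y4" "0 \<le> (1+y1)*y2" "0 \<le> (1+y1)*y3" using C by (auto simp: Ye M2_mat1)
  have yy: "y1*y1 + y2*y3 = 0" "y1*y2 + y2*y4 = 0" "y3*y1 + y4*y3 = 0"
    using YY by (simp_all add: Ye M2_zero)
  have "y1 = 0"
  proof (rule ccontr)
    assume "y1 \<noteq> 0"
    then have "y2 = 0" "y3 = 0" using yy(2,3) c(1) by (auto simp: algebra_simps)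
    then show False using yy(1) \<open>y1 \<noteq> 0\<close> by simp
  qed
  then have "y2*y3 = 0" "y4 = 0" "0 \<le> y2" "0 \<le> y3" using yy(1) c by auto
  moreover have "\<not> (y2 = 0 \<and> y3 = 0)" using \<open>Y \<noteq> 0\<close> \<open>y1 = 0\<close> \<open>y4 = 0\<close> by (auto simp: Ye M2_zero)
  ultimately show ?thesis using \<open>y1 = 0\<close> \<open>y4 = 0\<close> by (auto simp: Y_def[symmetric] Ye)
qed

lemma ray_set_scaleR: "c > 0 \<Longrightarrow> ray_set (c *\<^sub>R X) = ray_set X"
  unfolding ray_set_def par_curve_def
proof safe
  fix t :: real assume "c > 0" "t > 0"
  then show "\<exists>t'. mat 1 + t *\<^sub>R c *\<^sub>R X = mat 1 + t' *\<^sub>R X \<and> t' > 0"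
    by (intro exI[of _ "t*c"]) auto
next
  fix t :: real assume "c > 0" "t > 0"
  then show "\<exists>t'. mat 1 + t *\<^sub>R X = mat 1 + t' *\<^sub>R c *\<^sub>R X \<and> t' > 0"
    by (intro exI[of _ "t/c"]) auto
qed

lemma bdry_rays_frame:
  assumes k: "det k = 1" and "bdry_ray (act k N_std) Xp" "bdry_ray (act k N_std) Xm"
    and ne: "ray_set Xp \<noteq> ray_set Xm"
  shows "\<exists>\<beta>>0. \<exists>\<gamma>>0.
      (conj2 (adj2 k) Xp = M2 0 \<beta> 0 0 \<and> conj2 (adj2 k) Xm = M2 0 0 \<gamma> 0) \<or>
      (conj2 (adj2 k) Xm = M2 0 \<beta> 0 0 \<and> conj2 (adj2 k) Xp = M2 0 0 \<gamma> 0)"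
proof -
  have same: "ray_set Xp = ray_set Xm"
    if "conj2 (adj2 k) Xp = c1 *\<^sub>R E" "conj2 (adj2 k) Xm = c2 *\<^sub>R E" "c1 > 0" "c2 > 0" for c1 c2 E
  proof -
    have "Xp = conj2 k (c1 *\<^sub>R E)" "Xm = conj2 k (c2 *\<^sub>R E)"
      using conj2_conj2[of "adj2 k" Xp] conj2_conj2[of "adj2 k" Xm] that(1,2) k by simp_all
    then have "Xp = (c1/c2) *\<^sub>R Xm" using that(4) linear_scale[OF linear_conj2] by simp
    then show ?thesis using ray_set_scaleR[of "c1/c2" Xm] that(3,4) by simp
  qed
  have "M2 0 \<beta> 0 0 = \<beta> *\<^sub>R M2 0 1 0 0" "M2 0 0 \<beta> 0 = \<beta> *\<^sub>R M2 0 0 1 0" for \<beta> by simp_all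
  then show ?thesis
    using bdry_ray_frame[OF k assms(2)] bdry_ray_frame[OF k assms(3)] same ne by metis
qed

section \<open>The hypotheses in an adapted frame\<close>

lemma le_0_of_bounded_above:
  fixes P U C :: real
  assumes "\<forall>r>0. P*r + U/r \<le> C"
  shows "P \<le> 0"
proof (rule ccontr)
  assume "\<not> P \<le> 0"
  then have P: "P > 0" by simp
  define r where "r = (\<bar>C\<bar> + \<bar>U\<bar> + 1)/P + 1"
  have r: "r \<ge> 1" using P by (simp add: r_def)
  have "P*r = \<bar>C\<bar> + \<bar>U\<bar> + 1 + P" using P by (simp add: r_def field_simps)
  moreover have "\<bar>U/r\<bar> \<le> \<bar>U\<bar>" using r by (simp add: divide_le_eq mult_le_cancel_left1)
  ultimately have "P*r + U/r > C" using P by linarith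
  moreover have "r > 0" using r by simp
  ultimately show False using assms by (meson not_le)
qed

lemma le_0_of_bounded_above_square:
  fixes P U C :: real
  assumes "\<forall>t>0. P*(t*t) + U/(t*t) \<le> C"
  shows "P \<le> 0"
proof (rule le_0_of_bounded_above[of P U C], intro allI impI)
  fix r :: real assume "r > 0"
  then have "sqrt r > 0" "sqrt r * sqrt r = r" by simp_all
  then show "P*r + U/r \<le> C" using assms by metis
qed

lemma nonneg_of_pos_on_half_line:
  fixes A B :: real
  assumes "\<forall>y>0. 0 < A*y + B/y"
  shows "0 \<le> A" "0 \<le> B"
proof -
  have "\<forall>r>0. (-A)*r + (-B)/r \<le> 0" using assms by (auto simp: algebra_simps)
  from le_0_of_bounded_above[OF this] show "0 \<le> A" by simp
  have "\<forall>r>0. (-B)*r + (-A)/r \<le> 0"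
  proof (intro allI impI)
    fix r :: real assume "r > 0"
    then have "0 < A*(1/r) + B/(1/r)" using assms[rule_format, of "1/r"] by simp
    then show "(-B)*r + (-A)/r \<le> 0" by (simp add: field_simps)
  qed
  from le_0_of_bounded_above[OF this] show "0 \<le> B" by simp
qed

lemma nonpos_of_neg_on_half_line:
  fixes A B :: real
  assumes "\<forall>y>0. A*y + B/y < 0"
  shows "A \<le> 0" "B \<le> 0"
proof -
  have "\<forall>y>0. 0 < (-A)*y + (-B)/y" using assms by (auto simp: algebra_simps)
  from nonneg_of_pos_on_half_line[OF this] show "A \<le> 0" "B \<le> 0" by auto
qed

lemma nonpos_of_bounded_above_quadrant:
  fixes P Q R U C :: real
  assumes H: "\<forall>y>0. \<forall>z>0. P*(y*z) + Q*(y/z) + R*(z/y) + U/(y*z) \<le> C"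
  shows "P \<le> 0" "Q \<le> 0" "R \<le> 0" "U \<le> 0"
proof -
  have "\<forall>t>0. P*(t*t) + U/(t*t) \<le> C - Q - R"
  proof (intro allI impI)
    fix t :: real assume "t > 0"
    then show "P*(t*t) + U/(t*t) \<le> C - Q - R" using H[rule_format, of t t] by simp
  qed
  then show "P \<le> 0" by (rule le_0_of_bounded_above_square)
  have "\<forall>t>0. Q*(t*t) + R/(t*t) \<le> C - P - U"
  proof (intro allI impI)
    fix t :: real assume "t > 0"
    then show "Q*(t*t) + R/(t*t) \<le> C - P - U" using H[rule_format, of t "1/t"]
      by (simp add: field_simps)
  qed
  then show "Q \<le> 0" by (rule le_0_of_bounded_above_square)
  have "\<forall>t>0. R*(t*t) + Q/(t*t) \<le> C - P - U"
  proof (intro allI impI)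
    fix t :: real assume "t > 0"
    then show "R*(t*t) + Q/(t*t) \<le> C - P - U" using H[rule_format, of "1/t" t]
      by (simp add: field_simps)
  qed
  then show "R \<le> 0" by (rule le_0_of_bounded_above_square)
  have "\<forall>t>0. U*(t*t) + P/(t*t) \<le> C - Q - R"
  proof (intro allI impI)
    fix t :: real assume "t > 0"
    then show "U*(t*t) + P/(t*t) \<le> C - Q - R" using H[rule_format, of "1/t" "1/t"]
      by (simp add: field_simps)
  qed
  then show "U \<le> 0" by (rule le_0_of_bounded_above_square)
qed

text \<open>Since \<open>arcosh m = ln (m + sqrt (m\<^sup>2 - 1))\<close> lies between \<open>ln (2m - 1)\<close> and \<open>ln (2m)\<close>.\<close>

lemma arcosh_diff_le_imp:
  fixes m1 m2 \<sigma> :: real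
  assumes m: "m1 \<ge> 1" "m2 \<ge> 1" and d: "arcosh m1 - arcosh m2 \<le> \<sigma>"
  shows "2*m1 - 1 \<le> 2 * exp \<sigma> * m2"
proof -
  define a1 where "a1 = m1 + sqrt (m1^2 - 1)"
  define a2 where "a2 = m2 + sqrt (m2^2 - 1)"
  have s1: "sqrt (m1^2 - 1) \<ge> m1 - 1"
    by (rule real_le_rsqrt) (use m in \<open>simp add: power2_eq_square algebra_simps\<close>)
  have s2: "sqrt (m2^2 - 1) \<le> m2"
    by (rule real_le_lsqrt) (use m in auto)
  have "1 \<le> m2^2" using m(2) by (simp add: one_le_power)
  then have a: "a1 > 0" "a2 > 0" using s1 m by (auto simp: a1_def a2_def add_pos_nonneg)
  have "ln a1 \<le> ln a2 + \<sigma>" using d m by (simp add: arcosh_real_def a1_def a2_def)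
  then have "a1 \<le> a2 * exp \<sigma>" using a by (metis exp_add exp_le_cancel_iff exp_ln)
  also have "\<dots> \<le> (2*m2) * exp \<sigma>" using s2 by (intro mult_right_mono) (simp_all add: a2_def)
  finally have "a1 \<le> 2 * exp \<sigma> * m2" by (simp add: mult_ac)
  then show ?thesis using s1 unfolding a1_def by linarith
qed

definition diag_pt :: "real \<Rightarrow> mat2" where
  "diag_pt y = M2 y 0 0 (1/y)"

lemma diag_pt_in_geod: "y > 0 \<Longrightarrow> diag_pt y \<in> geod N_std"
  by (simp add: diag_pt_def geod_def hyp_plane_M2 N_std_def)

lemma act_diag_pt_in_geod: "det k = 1 \<Longrightarrow> y > 0 \<Longrightarrow> act k (diag_pt y) \<in> geod (act k N_std)"
  by (simp add: geod_act diag_pt_in_geod)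

lemma mink_act_act: "det k1 = 1 \<Longrightarrow> mink (act k1 X) (act k2 Y) = mink X (act (adj2 k1 ** k2) Y)"
  using mink_act[of "adj2 k1" "act k1 X" "act k2 Y"] by (simp add: act_act mult_adj2_left)

lemma mink_diag_pt_act: "y > 0 \<Longrightarrow> z > 0 \<Longrightarrow>
  2 * mink (diag_pt y) (act (M2 p q r w) (diag_pt z)) = (r*r)*(y*z) + (w*w)*(y/z) + (p*p)*(z/y) + (q*q)/(y*z)"
  by (simp add: diag_pt_def field_simps)

text \<open>\<open>E\<^sub>1\<^sub>1\<close> and \<open>E\<^sub>2\<^sub>2\<close> represent the endpoints of \<open>geod N_std\<close>.\<close>

lemma endpoints_frame:
  assumes "det k = 1" "V = M2 1 0 0 0 \<or> V = M2 0 0 0 1"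
  shows "ideal_pt (act k V) \<and> mink (act k V) (act k N_std) = 0"
proof -
  obtain p q r w where k: "k = M2 p q r w" by (rule M2_cases)
  have "p \<noteq> 0 \<or> r \<noteq> 0" "q \<noteq> 0 \<or> w \<noteq> 0" using assms(1) by (auto simp: k)
  then have "p*p + r*r > 0" "q*q + w*w > 0"
    using sum_power2_gt_zero_iff[of p r] sum_power2_gt_zero_iff[of q w] by (simp_all add: power2_eq_square)
  then have "(act k V)$1$1 + (act k V)$2$2 > 0" using assms(2) by (auto simp: k)
  moreover have "sym2 (act k V)" "det (act k V) = 0" using assms(2) by (auto intro: sym2_act simp: det_act)
  moreover have "mink V N_std = 0" using assms(2) by (auto simp: N_std_def)
  ultimately show ?thesis using assms(1) by (auto simp: ideal_pt_def mink_act)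
qed

lemma away_signs_frame:
  assumes k1: "det k1 = 1" and k2: "det k2 = 1"
    and dc: "disjoint_closures (act k1 N_std) (act k2 N_std)"
    and away: "oriented_away (act k1 N_std) (act k2 N_std)"
  shows "away_signs (adj2 k1 ** k2)"
proof -
  obtain a b c d where K: "adj2 k1 ** k2 = M2 a b c d" by (rule M2_cases)
  have neg: "\<forall>y>0. (a*c)*y + (b*d)/y < 0"
  proof (intro allI impI)
    fix y :: real assume "y > 0"
    have "mink (act k2 (diag_pt y)) (act k1 N_std) = mink N_std (act (M2 a b c d) (diag_pt y))"
      using mink_act_act[OF k1, of N_std k2] K mink_sym by metis
    also have "\<dots> = (a*c)*y + (b*d)/y" using \<open>y > 0\<close> by (simp add: diag_pt_def N_std_def field_simps)
    finally have "mink (act k2 (diag_pt y)) (act k1 N_std) = (a*c)*y + (b*d)/y" .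
    moreover have "mink (act k2 (diag_pt y)) (act k1 N_std) < 0"
      using away act_diag_pt_in_geod[OF k2 \<open>y > 0\<close>] by (simp add: oriented_away_def)
    ultimately show "(a*c)*y + (b*d)/y < 0" by simp
  qed
  have pos: "\<forall>y>0. 0 < (c*d)*y + (a*b)/y"
  proof (intro allI impI)
    fix y :: real assume "y > 0"
    have "mink (act k1 (diag_pt y)) (act k2 N_std) = mink (diag_pt y) (act (M2 a b c d) N_std)"
      using mink_act_act[OF k1] K by simp
    also have "\<dots> = - ((c*d)*y + (a*b)/y)" using \<open>y > 0\<close> by (simp add: diag_pt_def act_N_std field_simps)
    finally have "mink (act k1 (diag_pt y)) (act k2 N_std) = - ((c*d)*y + (a*b)/y)" .
    moreover have "mink (act k1 (diag_pt y)) (act k2 N_std) < 0"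
      using away act_diag_pt_in_geod[OF k1 \<open>y > 0\<close>] by (simp add: oriented_away_def)
    ultimately show "0 < (c*d)*y + (a*b)/y" by simp
  qed
  have ends: "mink (act k1 V) (act k2 N_std) \<noteq> 0" if "V = M2 1 0 0 0 \<or> V = M2 0 0 0 1" for V
    using dc endpoints_frame[OF k1 that] unfolding disjoint_closures_def by blast
  have "c*d \<noteq> 0" "a*b \<noteq> 0"
    using ends[of "M2 1 0 0 0"] ends[of "M2 0 0 0 1"] mink_act_act[OF k1, of _ k2 N_std] K
    by (simp_all add: act_N_std)
  moreover note nonpos_of_neg_on_half_line[OF neg] nonneg_of_pos_on_half_line[OF pos]
  ultimately show ?thesis unfolding K by (auto simp: less_le)
qed

text \<open>Testing the displacement hypothesis on the points \<open>diag_pt y\<close>, \<open>diag_pt z\<close> of the two lines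
gives a Laurent polynomial in \<open>y\<close>, \<open>z\<close> bounded above; its leading coefficients compare the entries of
\<open>H\<close> with those of \<open>K\<close>.\<close>

lemma entries_dominated_frame:
  assumes k1: "det k1 = 1" and k2: "det k2 = 1" and h: "det h = 1"
    and bdd: "bdd_above {hdist x (act h x') - hdist x x' | x x'. x \<in> geod (act k1 N_std) \<and> x' \<in> geod (act k2 N_std)}"
    and sup: "Sup {hdist x (act h x') - hdist x x' | x x'. x \<in> geod (act k1 N_std) \<and> x' \<in> geod (act k2 N_std)} < 0"
    and away: "away_signs (adj2 k1 ** k2)"
  shows "entries_dominated (adj2 k1 ** (h ** k2)) (adj2 k1 ** k2)"
proof -
  obtain p q r w where H: "adj2 k1 ** (h ** k2) = M2 p q r w" by (rule M2_cases)
  obtain a b c d where K: "adj2 k1 ** k2 = M2 a b c d" by (rule M2_cases)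
  define D where "D = {hdist x (act h x') - hdist x x' | x x'. x \<in> geod (act k1 N_std) \<and> x' \<in> geod (act k2 N_std)}"
  define e where "e = exp (Sup D)"
  have e: "e < 1" using sup by (simp add: e_def D_def)
  have "\<forall>y>0. \<forall>z>0. (r*r - e*(c*c))*(y*z) + (w*w - e*(d*d))*(y/z) + (p*p - e*(a*a))*(z/y)
      + (q*q - e*(b*b))/(y*z) \<le> 1"
  proof (intro allI impI)
    fix y z :: real assume y: "y > 0" and z: "z > 0"
    define x where "x = act k1 (diag_pt y)"
    define x' where "x' = act k2 (diag_pt z)"
    have x: "x \<in> geod (act k1 N_std)" "x' \<in> geod (act k2 N_std)"
      using act_diag_pt_in_geod k1 k2 y z by (simp_all add: x_def x'_def)
    then have "hdist x (act h x') - hdist x x' \<in> D" unfolding D_def by blast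
    moreover have "bdd_above D" using bdd by (simp add: D_def)
    ultimately have "hdist x (act h x') - hdist x x' \<le> Sup D" by (rule cSup_upper)
    then have "arcosh (mink x (act h x')) - arcosh (mink x x') \<le> Sup D" by (simp add: hdist_def)
    moreover have xh: "x \<in> hyp_plane" "x' \<in> hyp_plane" using x by (simp_all add: geod_def)
    then have "mink x (act h x') \<ge> 1" "mink x x' \<ge> 1"
      using h by (simp_all add: mink_hyp_plane_ge_1 act_in_hyp_plane)
    ultimately have "2 * mink x (act h x') - 1 \<le> 2 * e * mink x x'"
      unfolding e_def using arcosh_diff_le_imp by blast
    moreover have "2 * mink x (act h x') = (r*r)*(y*z) + (w*w)*(y/z) + (p*p)*(z/y) + (q*q)/(y*z)"
      unfolding x_def x'_def act_act mink_act_act[OF k1] H using mink_diag_pt_act[OF y z] .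
    moreover have "2 * mink x x' = (c*c)*(y*z) + (d*d)*(y/z) + (a*a)*(z/y) + (b*b)/(y*z)"
      unfolding x_def x'_def mink_act_act[OF k1] K using mink_diag_pt_act[OF y z] .
    ultimately show "(r*r - e*(c*c))*(y*z) + (w*w - e*(d*d))*(y/z) + (p*p - e*(a*a))*(z/y)
      + (q*q - e*(b*b))/(y*z) \<le> 1"
      by (simp add: algebra_simps diff_divide_distrib)
  qed
  note le = nonpos_of_bounded_above_quadrant[OF this]
  have lt: "u^2 < v^2" if "u * u - e * (v * v) \<le> 0" "v \<noteq> 0" for u v :: real
  proof -
    have "v * v > 0" using that(2) not_real_square_gt_zero by blast
    then have "e * (v * v) < 1 * (v * v)" using e by (intro mult_strict_right_mono)
    then show ?thesis using that(1) by (simp add: power2_eq_square)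
  qed
  have "a \<noteq> 0" "b \<noteq> 0" "c \<noteq> 0" "d \<noteq> 0" using away K by auto
  then show ?thesis using lt[OF le(3)] lt[OF le(4)] lt[OF le(1)] lt[OF le(2)] H K by simp
qed

section \<open>The two alternatives\<close>

lemma exactly_one3_swap: "exactly_one3 A B C \<Longrightarrow> exactly_one3 A C B"
  by (auto simp: exactly_one3_def)

lemma mult_mult_adj2_cancel:
  "det k = 1 \<Longrightarrow> A ** k ** adj2 k = A" "det k = 1 \<Longrightarrow> A ** adj2 k ** k = A"
  by (simp_all add: matrix_mul_assoc[symmetric] mult_adj2_right mult_adj2_left)

lemma exactly_one_ray_meets_SQ:
  assumes k1: "det k1 = 1" and k2: "det k2 = 1" and h: "det h = 1"
    and away: "away_signs (adj2 k1 ** k2)" "away_signs (adj2 k1 ** (h ** k2))"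
    and dom: "entries_dominated (adj2 k1 ** (h ** k2)) (adj2 k1 ** k2)"
    and rays: "bdry_ray (act k2 N_std) Xp" "bdry_ray (act k2 N_std) Xm" "ray_set Xp \<noteq> ray_set Xm"
  shows "exactly_one3 (h \<in> SQ (act k1 N_std))
     (meets_transv (\<lambda>t. h ** par_curve Xp t) (SQ (act k1 N_std)))
     (meets_transv (\<lambda>t. h ** par_curve Xm t) (SQ (act k1 N_std)))"
proof -
  define K where "K = adj2 k1 ** k2"
  define H where "H = adj2 k1 ** (h ** k2)"
  have dets: "det H = 1" "det K = 1" using k1 k2 h by (simp_all add: H_def K_def det_mul)
  have conj_h: "conj2 (adj2 k1) (h ** G) = H ** conj2 (adj2 k2) G ** adj2 K" for G
    using k2 by (simp add: H_def K_def conj2_def adj2_mult matrix_mul_assoc mult_mult_adj2_cancel)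
  have "h \<in> SQ (act k1 N_std) \<longleftrightarrow> H ** adj2 K \<in> SQ_std"
    using SQ_frame_iff[OF k1] conj_h[of "mat 1"] k2 by (simp add: conj2_def mult_adj2_left)
  moreover have "meets_transv (\<lambda>t. h ** par_curve X t) (SQ (act k1 N_std)) \<longleftrightarrow>
      meets_transv (\<lambda>t. H ** par_curve (conj2 (adj2 k2) X) t ** adj2 K) SQ_std" for X
    using meets_transv_SQ_frame_iff[OF k1] conj_h par_curve_conj2[of "adj2 k2"] k2 by simp
  moreover obtain \<beta> \<gamma> where "\<beta> > 0" "\<gamma> > 0"
    "(conj2 (adj2 k2) Xp = M2 0 \<beta> 0 0 \<and> conj2 (adj2 k2) Xm = M2 0 0 \<gamma> 0) \<or>
     (conj2 (adj2 k2) Xm = M2 0 \<beta> 0 0 \<and> conj2 (adj2 k2) Xp = M2 0 0 \<gamma> 0)"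
    using bdry_rays_frame[OF k2 rays] by blast
  ultimately show ?thesis
    using exactly_one_std[OF dets away(2,1)[folded K_def H_def] dom[folded K_def H_def] \<open>\<beta> > 0\<close> \<open>\<gamma> > 0\<close>]
      exactly_one3_swap by auto
qed

lemma det_par_curve_nilpotent:
  assumes "X ** X = 0" shows "det (par_curve X t) = 1"
proof -
  obtain x y z u where X: "X = M2 x y z u" by (rule M2_cases)
  have e: "x*x + y*z = 0" "x*y + y*u = 0" "z*x + u*z = 0" "z*y + u*u = 0"
    using assms by (simp_all add: X M2_zero)
  have "x + u = 0"
  proof (rule ccontr)
    assume n: "x + u \<noteq> 0"
    have "y*(x+u) = 0" "z*(x+u) = 0" using e by (simp_all add: algebra_simps)
    then have "y = 0" "z = 0" using n by auto
    then show False using e n by simp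
  qed
  moreover from this have "u = - x" by simp
  then have "x*u - y*z = 0" using e(1) by simp
  moreover have "det (par_curve X t) = 1 + t*(x+u) + t*t*(x*u - y*z)"
    by (simp add: X par_curve_M2 algebra_simps)
  ultimately show ?thesis by simp
qed

lemma matrix_inv_image_SQ: "matrix_inv ` SQ N = adj2 ` SQ N"
  by (intro image_cong refl) (auto simp: SQ_def SL2_def matrix_inv_eq_adj2)

lemma mem_matrix_inv_SQ_iff: "det h = 1 \<Longrightarrow> h \<in> matrix_inv ` SQ N \<longleftrightarrow> adj2 h \<in> SQ N"
  unfolding matrix_inv_image_SQ by (metis adj2_adj2 image_iff)

lemma meets_transv_matrix_inv_SQ_iff:
  assumes "X ** X = 0"
  shows "meets_transv (\<lambda>t. matrix_inv (par_curve X t) ** h) (matrix_inv ` SQ N) \<longleftrightarrow>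
    meets_transv (\<lambda>t. adj2 h ** par_curve X t) (SQ N)"
proof -
  have "matrix_inv (par_curve X t) ** h = adj2 (adj2 h ** par_curve X t)" for t
    using det_par_curve_nilpotent[OF assms] by (simp add: matrix_inv_eq_adj2 adj2_mult)
  then show ?thesis
    unfolding matrix_inv_image_SQ using meets_transv_linear_image_iff[OF linear_adj2 linear_adj2] by simp
qed

text \<open>The second alternative is the first one for \<open>(\<ell>', \<ell>, h\<^sup>-\<^sup>1)\<close>: inversion maps \<open>SQ(\<ell>')\<^sup>-\<^sup>1\<close> to
\<open>SQ(\<ell>')\<close> and the rays \<open>P\<^sub>\<plusminus>(t)\<^sup>-\<^sup>1 h\<close> to \<open>h\<^sup>-\<^sup>1 P\<^sub>\<plusminus>(t)\<close>, and in the frames the roles of \<open>K\<close>, \<open>H\<close>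
are taken by their inverses.\<close>

theorem mainTheorem16:
  fixes N N' h :: "real^2^2"
  assumes "spacelike_unit N" and "spacelike_unit N'" and "h \<in> SL2"
    and "bdd_above {hdist x (act h x') - hdist x x' | x x'. x \<in> geod N \<and> x' \<in> geod N'}"
    and "Sup {hdist x (act h x') - hdist x x' | x x'. x \<in> geod N \<and> x' \<in> geod N'} < 0"
    and "disjoint_closures N N'" and "oriented_away N N'"
    and "disjoint_closures N (act h N')" and "oriented_away N (act h N')"
  shows "(\<forall>Xp Xm. bdry_ray N' Xp \<and> bdry_ray N' Xm \<and> ray_set Xp \<noteq> ray_set Xm \<longrightarrow>
            exactly_one3 (h \<in> SQ N)
              (meets_transv (\<lambda>t. h ** par_curve Xp t) (SQ N))
              (meets_transv (\<lambda>t. h ** par_curve Xm t) (SQ N)))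
       \<and> (\<forall>Xp Xm. bdry_ray N Xp \<and> bdry_ray N Xm \<and> ray_set Xp \<noteq> ray_set Xm \<longrightarrow>
            exactly_one3 (h \<in> matrix_inv ` SQ N')
              (meets_transv (\<lambda>t. matrix_inv (par_curve Xp t) ** h) (matrix_inv ` SQ N'))
              (meets_transv (\<lambda>t. matrix_inv (par_curve Xm t) ** h) (matrix_inv ` SQ N')))"
proof -
  have h: "det h = 1" using assms(3) by (simp add: SL2_def)
  obtain k1 k2 where k1: "det k1 = 1" "N = act k1 N_std" and k2: "det k2 = 1" "N' = act k2 N_std"
    using ex_frame assms(1,2) by metis
  have hk2: "det (h ** k2) = 1" "act h N' = act (h ** k2) N_std"
    using h k2 by (simp_all add: det_mul act_act)
  have away: "away_signs (adj2 k1 ** k2)" "away_signs (adj2 k1 ** (h ** k2))"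
    using away_signs_frame[OF k1(1) k2(1)] away_signs_frame[OF k1(1) hk2(1)] assms(6-9) k1 k2 hk2
    by simp_all
  have dom: "entries_dominated (adj2 k1 ** (h ** k2)) (adj2 k1 ** k2)"
    using entries_dominated_frame[OF k1(1) k2(1) h _ _ away(1)] assms(4,5) k1 k2 by simp
  have inv: "adj2 (adj2 k1 ** k2) = adj2 k2 ** k1" "adj2 (adj2 k1 ** (h ** k2)) = adj2 k2 ** (adj2 h ** k1)"
    by (simp_all add: adj2_mult matrix_mul_assoc)
  have inverse_frame: "exactly_one3 (adj2 h \<in> SQ N')
      (meets_transv (\<lambda>t. adj2 h ** par_curve Xp t) (SQ N'))
      (meets_transv (\<lambda>t. adj2 h ** par_curve Xm t) (SQ N'))"
    if "bdry_ray N Xp" "bdry_ray N Xm" "ray_set Xp \<noteq> ray_set Xm" for Xp Xm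
    using exactly_one_ray_meets_SQ[OF k2(1) k1(1) _ away_signs_adj2[OF away(1), unfolded inv]
        away_signs_adj2[OF away(2), unfolded inv] entries_dominated_adj2[OF dom, unfolded inv]]
      that h k1 k2
    by simp
  show ?thesis
    using exactly_one_ray_meets_SQ[OF k1(1) k2(1) h away dom] k1 k2 inverse_frame
      mem_matrix_inv_SQ_iff[OF h] meets_transv_matrix_inv_SQ_iff
    by (auto simp: bdry_ray_def)
qed
end
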